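(* Let $H\in(\tfrac12,1)$, $(b_1,b_2,x_0)\in\mathbb{R}^3$ with $b_2\neq 0$, and $q>0$, $r>0$. For each $K\in\mathbb{R}$, let $u(t)=Kx(t)$ where $x$ is the solution of $$x(t)=x_0+\int_0^t\big(b_1x(t')+b_2u(t')\big)\,dt'+R^H(t),\qquad t\ge 0,$$ with $R^H$ a Rosenblatt process of Hurst index $H$, and let $$L_\infty(u)=\limsup_{T\to\infty}\frac1T\,\mathbb{E}\int_0^T\big(q\,x^2(t)+r\,u^2(t)\big)\,dt .$$ Consider the problem $\inf_{u\in\mathcal U}L_\infty(u)$ over $\mathcal U=\{(u(t))_{t\ge0}: u(t)=Kx(t),\ K\in\mathbb{R}\}$. Then the optimal gain in this family of admissible feedbacks is $$\hat K=-\frac{b_1+\sqrt{b_1^2+4H(1-H)\frac{b_2^2q}{r}}}{2b_2(1-H)},$$ and the optimal cost is $$L_\infty(\hat K)=\frac{\Gamma(2H)}{[-(b_1+b_2\hat K)]^{2H-1}}\left(-\frac{r\hat K}{b_2}\right)=\frac{\Gamma(2H+1)}{2[-(b_1+b_2\hat K)]^{2H}}\big(q+r\hat K^2\big).$$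
   Context: The Rosenblatt process with Hurst index $H\in(\tfrac12,1)$ is $R^H(t)=C_R^H\int_{\mathbb{R}^2}\Big(\int_0^t(u-y_1)_+^{\frac H2-1}(u-y_2)_+^{\frac H2-1}du\Big)\,dW(y_1)\,dW(y_2)$, a double Wiener–Itô integral with respect to a two-sided standard Brownian motion $W$, where $C_R^H>0$ is the normalizing constant making $\mathbb{E}[R^H(1)^2]=1$. It is self-similar of index $H$, non-Gaussian, has continuous paths and covariance $\tfrac12(t^{2H}+s^{2H}-|t-s|^{2H})$. The linear equation with additive Rosenblatt noise has the solution $x(t)=e^{(b_1+b_2K)t}x_0+\int_0^te^{(b_1+b_2K)(t-s)}dR^H(s)$, the integral defined pathwise by integration by parts. $\Gamma$ is the Gamma function. *)

theory Defs
  imports "HOL-Probability.Probability"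
begin

text \<open>Covariance of the Rosenblatt process (same as that of fBm).\<close>
definition rosen_cov :: "real \<Rightarrow> real \<Rightarrow> real \<Rightarrow> real" where
  "rosen_cov H t s = (t powr (2*H) + s powr (2*H) - \<bar>t - s\<bar> powr (2*H)) / 2"

definition rosenblatt_like :: "'a measure \<Rightarrow> real \<Rightarrow> (real \<Rightarrow> 'a \<Rightarrow> real) \<Rightarrow> bool" where
  "rosenblatt_like M H R \<longleftrightarrow>
     prob_space M \<and>
     (\<forall>t. R t \<in> borel_measurable M) \<and>
     (\<forall>\<omega>\<in>space M. R 0 \<omega> = 0 \<and> continuous_on {0..} (\<lambda>t. R t \<omega>)) \<and>
     (\<forall>t\<ge>0. integrable M (\<lambda>\<omega>. (R t \<omega>)\<^sup>2) \<and> (\<integral>\<omega>. R t \<omega> \<partial>M) = 0) \<and>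
     (\<forall>t\<ge>0. \<forall>s\<ge>0. (\<integral>\<omega>. R t \<omega> * R s \<omega> \<partial>M) = rosen_cov H t s)"

text \<open>Pathwise solution x(t) = e^{at} x0 + \<integral>_0^t e^{a(t-s)} dR(s), the stochastic integral
  defined by integration by parts (using R(0) = 0):
  \<integral>_0^t e^{a(t-s)} dR(s) = R(t) + a \<integral>_0^t e^{a(t-s)} R(s) ds.\<close>
definition lin_sol :: "(real \<Rightarrow> 'a \<Rightarrow> real) \<Rightarrow> real \<Rightarrow> real \<Rightarrow> real \<Rightarrow> 'a \<Rightarrow> real" where
  "lin_sol R x0 a t \<omega> =
     exp (a * t) * x0 + R t \<omega> + a * integral {0..t} (\<lambda>s. exp (a * (t - s)) * R s \<omega>)"

definition lqr_cost :: "'a measure \<Rightarrow> (real \<Rightarrow> 'a \<Rightarrow> real) \<Rightarrow> real \<Rightarrow> real \<Rightarrow> real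
    \<Rightarrow> real \<Rightarrow> real \<Rightarrow> real \<Rightarrow> ennreal" where
  "lqr_cost M R b1 b2 x0 q r K =
     Limsup at_top (\<lambda>T::real. ennreal (1 / T) *
        (\<integral>\<^sup>+ \<omega>. ennreal (integral {0..T}
            (\<lambda>t. q * (lin_sol R x0 (b1 + b2 * K) t \<omega>)\<^sup>2
               + r * (K * lin_sol R x0 (b1 + b2 * K) t \<omega>)\<^sup>2)) \<partial>M))"

end

(*
  For a gain K with a = b1 + b2 K < 0, integration by parts and the substitution v = t - s give
  x(t) = exp (a t) x0 + exp (a t) R(t) - a * int_0^t exp (a v) (R(t) - R(t - v)) dv.
  The increments of R are stationary with covariance rosen_cov H v w, so E x(t)^2 converges to
  a^2 * int int_[0,oo)^2 exp (a (v + w)) rosen_cov H v w dv dw = Gamma (2H + 1) / (2 (-a)^(2H)),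
  a sum of Gamma integrals, and the long-run average cost is (q + r K^2) times this limit.
  For a >= 0 the covariances E R(s) R(t) are nonnegative, whence E x(t)^2 >= E R(t)^2 = t^(2H)
  and the cost is infinite.  Minimising (q + r K^2) / (-a)^(2H) over the stable gains is a
  calculus problem in s = -a: the derivative has the sign of a quadratic with a single positive
  root, which gives Khat; the first-order condition -(r Khat / b2) s = H (q + r Khat^2) and
  Gamma (2H + 1) = 2H Gamma (2H) then give the first form of the optimal cost.
*)

theory Submission
  imports Defs "HOL-Real_Asymp.Real_Asymp"
begin

section \<open>Gamma integrals and the exponentially weighted covariance kernel\<close>

lemma nn_integral_exp_Ici:
  fixes b :: real
  assumes "b < 0"
  shows "(\<integral>\<^sup>+u. ennreal (exp (b * u)) * indicator {0..} u \<partial>lborel) = ennreal (-1 / b)"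
proof -
  have "((\<lambda>u. exp (b * u) / b) \<longlongrightarrow> 0) at_top"
    using assms by real_asymp
  then have "(\<integral>\<^sup>+u. ennreal (exp (b * u)) * indicator {0..} u \<partial>lborel) = ennreal (0 - exp (b * 0) / b)"
    by (intro nn_integral_FTC_atLeast) (use assms in \<open>auto intro!: derivative_eq_intros\<close>)
  then show ?thesis
    by simp
qed

lemma nn_integral_exp_powr_Ici:
  fixes b p :: real
  assumes b: "b < 0" and p: "p > -1"
  shows "(\<integral>\<^sup>+u. ennreal (exp (b * u) * u powr p) * indicator {0..} u \<partial>lborel)
           = ennreal (Gamma (p + 1) / (-b) powr (p + 1))"
proof -
  define I where "I = (\<integral>\<^sup>+u. ennreal (exp (b * u) * u powr p) * indicator {0..} u \<partial>lborel)"
  have scale: "ennreal (indicator {0..} ((-b) * u) * ((-b) * u) powr p / exp ((-b) * u))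
      = ennreal ((-b) powr p) * (ennreal (exp (b * u) * u powr p) * indicator {0..} u)" for u
  proof (cases "u \<ge> 0")
    case True
    then have "((-b) * u) powr p = (-b) powr p * u powr p"
      using b powr_mult[of "-b" u p] by simp
    moreover have "(-b) * u \<ge> 0"
      using True b by (simp add: mult_nonpos_nonneg)
    ultimately show ?thesis
      using True b by (simp add: exp_minus field_simps ennreal_mult[symmetric])
  next
    case False
    then have "(-b) * u < 0"
      using b by (simp add: mult_neg_neg)
    then show ?thesis
      using False by simp
  qed
  have "ennreal (Gamma (p + 1)) = (\<integral>\<^sup>+t. ennreal (indicator {0..} t * t powr p / exp t) \<partial>lborel)"
    using Gamma_conv_nn_integral_real[of "p + 1"] p by simp
  also have "\<dots> = \<bar>-b\<bar> * (\<integral>\<^sup>+u. ennreal (indicator {0..} (0 + (-b) * u) * (0 + (-b) * u) powr p / exp (0 + (-b) * u)) \<partial>lborel)"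
    by (rule nn_integral_real_affine) (use b in auto)
  also have "\<dots> = ennreal (-b) * (\<integral>\<^sup>+u. ennreal (indicator {0..} ((-b) * u) * ((-b) * u) powr p / exp ((-b) * u)) \<partial>lborel)"
    using b by simp
  also have "\<dots> = ennreal (-b) * (ennreal ((-b) powr p) * I)"
    unfolding scale I_def by (subst nn_integral_cmult) auto
  also have "\<dots> = ennreal ((-b) powr (p + 1)) * I"
  proof -
    have "ennreal (-b) * ennreal ((-b) powr p) = ennreal ((-b) powr (p + 1))"
      using b by (simp add: ennreal_mult[symmetric] powr_add mult.commute)
    then show ?thesis
      by (simp add: mult.assoc[symmetric])
  qed
  finally have "ennreal (Gamma (p + 1)) = ennreal ((-b) powr (p + 1)) * I" .
  moreover have "(-b) powr (p + 1) > 0"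
    using b by simp
  ultimately show ?thesis
    unfolding I_def[symmetric] using p Gamma_real_pos[of "p + 1"]
    by (simp add: divide_ennreal[symmetric] ennreal_mult_divide_eq mult.commute)
qed

lemma nn_integral_exp_powr_shift:
  fixes a p v :: real
  assumes a: "a < 0" and p: "p > -1"
  shows "(\<integral>\<^sup>+w. ennreal (exp (a * (v + w)) * (w - v) powr p) * indicator {v..} w \<partial>lborel)
           = ennreal (exp (2 * a * v)) * ennreal (Gamma (p + 1) / (-a) powr (p + 1))"
proof -
  have "(\<integral>\<^sup>+w. ennreal (exp (a * (v + w)) * (w - v) powr p) * indicator {v..} w \<partial>lborel)
      = (\<integral>\<^sup>+u. ennreal (exp (a * (v + (v + 1 * u))) * ((v + 1 * u) - v) powr p)
                 * indicator {v..} (v + 1 * u) \<partial>lborel)"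
    by (subst nn_integral_real_affine[where c = 1 and t = v]) auto
  also have "\<dots> = (\<integral>\<^sup>+u. ennreal (exp (2 * a * v)) * (ennreal (exp (a * u) * u powr p) * indicator {0..} u) \<partial>lborel)"
    by (intro nn_integral_cong)
      (auto simp: ennreal_mult[symmetric] algebra_simps exp_add[symmetric] split: split_indicator)
  also have "\<dots> = ennreal (exp (2 * a * v)) * (\<integral>\<^sup>+u. ennreal (exp (a * u) * u powr p) * indicator {0..} u \<partial>lborel)"
    by (subst nn_integral_cmult) auto
  finally show ?thesis
    using nn_integral_exp_powr_Ici[OF a p] by simp
qed

lemma (in pair_sigma_finite) nn_integral_fst_snd_times:
  assumes [measurable]: "f \<in> borel_measurable M1" "g \<in> borel_measurable M2"
  shows "(\<integral>\<^sup>+z. f (fst z) * g (snd z) \<partial>(M1 \<Otimes>\<^sub>M M2)) = (\<integral>\<^sup>+x. f x \<partial>M1) * (\<integral>\<^sup>+y. g y \<partial>M2)"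
proof -
  have "(\<integral>\<^sup>+z. f (fst z) * g (snd z) \<partial>(M1 \<Otimes>\<^sub>M M2)) = (\<integral>\<^sup>+x. \<integral>\<^sup>+y. f x * g y \<partial>M2 \<partial>M1)"
    by (subst M2.nn_integral_fst[symmetric]) auto
  also have "\<dots> = (\<integral>\<^sup>+x. f x * (\<integral>\<^sup>+y. g y \<partial>M2) \<partial>M1)"
    by (simp add: nn_integral_cmult)
  finally show ?thesis
    by (simp add: nn_integral_multc)
qed

lemma (in sigma_finite_measure) nn_integral_pair_swap:
  assumes [measurable]: "f \<in> borel_measurable (M \<Otimes>\<^sub>M M)"
  shows "(\<integral>\<^sup>+z. f (snd z, fst z) \<partial>(M \<Otimes>\<^sub>M M)) = (\<integral>\<^sup>+z. f z \<partial>(M \<Otimes>\<^sub>M M))"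
proof -
  have pair: "pair_sigma_finite M M"
    by (simp add: pair_sigma_finite_def sigma_finite_measure_axioms)
  have "(\<integral>\<^sup>+z. f (snd z, fst z) \<partial>(M \<Otimes>\<^sub>M M)) = (\<integral>\<^sup>+x. \<integral>\<^sup>+y. f (y, x) \<partial>M \<partial>M)"
    using nn_integral_fst[of "\<lambda>z. f (snd z, fst z)" M] by simp
  also have "\<dots> = (\<integral>\<^sup>+z. f z \<partial>(M \<Otimes>\<^sub>M M))"
    by (rule pair_sigma_finite.nn_integral_snd[OF pair]) simp
  finally show ?thesis .
qed

lemma rosen_cov_nonneg:
  assumes "0 < H" "0 \<le> v" "0 \<le> w"
  shows "0 \<le> rosen_cov H v w"
proof -
  have "\<bar>v - w\<bar> powr (2 * H) \<le> max v w powr (2 * H)"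
    using assms by (intro powr_mono2) auto
  also have "\<dots> \<le> v powr (2 * H) + w powr (2 * H)"
    by (simp add: max_def)
  finally show ?thesis
    unfolding rosen_cov_def by simp
qed

definition exp_cov_kernel :: "real \<Rightarrow> real \<Rightarrow> real \<times> real \<Rightarrow> real" where
  "exp_cov_kernel a H z = indicator {0..} (fst z) * indicator {0..} (snd z)
     * exp (a * (fst z + snd z)) * rosen_cov H (fst z) (snd z)"

lemma exp_cov_kernel_measurable [measurable]:
  "exp_cov_kernel a H \<in> borel_measurable (lborel \<Otimes>\<^sub>M lborel)"
  unfolding exp_cov_kernel_def rosen_cov_def by measurable

lemma exp_cov_kernel_nonneg: "0 < H \<Longrightarrow> 0 \<le> exp_cov_kernel a H z"
  unfolding exp_cov_kernel_def using rosen_cov_nonneg[of H "fst z" "snd z"]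
  by (auto split: split_indicator)

lemma (in pair_sigma_finite) has_bochner_integral_fst_snd_times:
  fixes f g :: "_ \<Rightarrow> real"
  assumes [measurable]: "f \<in> borel_measurable M1" "g \<in> borel_measurable M2"
    and nonneg: "\<And>x. 0 \<le> f x" "\<And>y. 0 \<le> g y" "0 \<le> c" "0 \<le> d"
    and "(\<integral>\<^sup>+x. ennreal (f x) \<partial>M1) = ennreal c" "(\<integral>\<^sup>+y. ennreal (g y) \<partial>M2) = ennreal d"
  shows "has_bochner_integral (M1 \<Otimes>\<^sub>M M2) (\<lambda>z. f (fst z) * g (snd z)) (c * d)"
  using assms nn_integral_fst_snd_times[of "\<lambda>x. ennreal (f x)" "\<lambda>y. ennreal (g y)"]
  by (intro has_bochner_integral_nn_integral) (auto simp: ennreal_mult)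

lemma nn_integral_exp_powr_diff_above_diagonal:
  fixes a p :: real
  assumes a: "a < 0" and p: "p > -1"
  shows "(\<integral>\<^sup>+z. ennreal (indicator {0..} (fst z) * exp (a * fst z) * (indicator {0..} (snd z) * exp (a * snd z))
             * (if fst z \<le> snd z then (snd z - fst z) powr p else 0)) \<partial>(lborel \<Otimes>\<^sub>M lborel))
           = ennreal (Gamma (p + 1) / (-a) powr (p + 1) * (-1 / (2 * a)))"
    (is "(\<integral>\<^sup>+z. ennreal (?D z) \<partial>_) = _")
proof -
  define g where "g = Gamma (p + 1) / (-a) powr (p + 1)"
  have g: "0 \<le> g"
    using p Gamma_real_pos[of "p + 1"] unfolding g_def by simp
  have "(\<integral>\<^sup>+z. ennreal (?D z) \<partial>(lborel \<Otimes>\<^sub>M lborel)) = (\<integral>\<^sup>+v. \<integral>\<^sup>+w. ennreal (?D (v, w)) \<partial>lborel \<partial>lborel)"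
    by (rule lborel.nn_integral_fst[symmetric]) simp
  also have "\<dots> = (\<integral>\<^sup>+v. ennreal (exp (2 * a * v)) * indicator {0..} v * ennreal g \<partial>lborel)"
  proof (rule nn_integral_cong)
    fix v :: real
    have "(\<integral>\<^sup>+w. ennreal (?D (v, w)) \<partial>lborel)
        = indicator {0..} v * (\<integral>\<^sup>+w. ennreal (exp (a * (v + w)) * (w - v) powr p) * indicator {v..} w \<partial>lborel)"
      by (cases "0 \<le> v")
        (auto simp: exp_add[symmetric] distrib_left intro!: nn_integral_cong split: split_indicator)
    then show "(\<integral>\<^sup>+w. ennreal (?D (v, w)) \<partial>lborel) = ennreal (exp (2 * a * v)) * indicator {0..} v * ennreal g"
      using nn_integral_exp_powr_shift[of a p v] a p by (simp add: g_def mult_ac)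
  qed
  also have "\<dots> = ennreal (-1 / (2 * a)) * ennreal g"
    using nn_integral_exp_Ici[of "2 * a"] a by (simp add: nn_integral_multc)
  also have "\<dots> = ennreal (g * (-1 / (2 * a)))"
    using ennreal_mult[OF g, of "-1 / (2 * a)"] a by (simp add: divide_nonpos_neg mult.commute)
  finally show ?thesis
    unfolding g_def .
qed

text \<open>The kernel is \<open>(G \<otimes> E + E \<otimes> G - D - D \<circ> swap) / 2\<close> with \<open>E v = exp (a v)\<close>,
  \<open>G v = exp (a v) v powr (2 H)\<close> and \<open>D\<close> the part of \<open>exp (a (v + w)) \<bar>v - w\<bar> powr (2 H)\<close>
  above the diagonal, all restricted to the positive quadrant.\<close>

lemma has_bochner_integral_exp_cov_kernel:
  fixes a H :: real
  assumes a: "a < 0" and H: "0 < H"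
  shows "has_bochner_integral (lborel \<Otimes>\<^sub>M lborel) (exp_cov_kernel a H)
           (Gamma (2 * H + 1) / (-a) powr (2 * H + 1) / (-2 * a))"
proof -
  define p where "p = 2 * H"
  define g where "g = Gamma (p + 1) / (-a) powr (p + 1)"
  define E where "E v = indicator {0..} v * exp (a * v)" for v :: real
  define G where "G v = E v * v powr p" for v
  define D where "D z = E (fst z) * E (snd z) * (if fst z \<le> snd z then (snd z - fst z) powr p else 0)"
    for z :: "real \<times> real"
  have p: "p > 0" and g: "g \<ge> 0"
    using H Gamma_real_pos[of "p + 1"] unfolding p_def g_def by auto
  have [measurable]: "E \<in> borel_measurable borel" "G \<in> borel_measurable borel"
    "D \<in> borel_measurable (lborel \<Otimes>\<^sub>M lborel)"
    unfolding E_def G_def D_def by measurable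
  have nonneg: "0 \<le> E v" "0 \<le> G v" "0 \<le> D z" for v z
    unfolding E_def G_def D_def by (auto split: split_indicator)
  have nnE: "(\<integral>\<^sup>+v. ennreal (E v) \<partial>lborel) = ennreal (-1 / a)"
    using nn_integral_exp_Ici[OF a] unfolding E_def by (simp add: indicator_mult_ennreal mult.commute)
  have nnG: "(\<integral>\<^sup>+v. ennreal (G v) \<partial>lborel) = ennreal g"
    using nn_integral_exp_powr_Ici[OF a, of p] p unfolding G_def E_def g_def
    by (simp add: indicator_mult_ennreal mult_ac)
  have nnD: "(\<integral>\<^sup>+z. ennreal (D z) \<partial>(lborel \<Otimes>\<^sub>M lborel)) = ennreal (g * (-1 / (2 * a)))"
    using nn_integral_exp_powr_diff_above_diagonal[OF a, of p] p unfolding D_def E_def g_def by simp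
  have nnD_swap: "(\<integral>\<^sup>+z. ennreal (D (snd z, fst z)) \<partial>(lborel \<Otimes>\<^sub>M lborel)) = ennreal (g * (-1 / (2 * a)))"
    using lborel.nn_integral_pair_swap[of "\<lambda>z. ennreal (D z)"] nnD by simp
  have pieces: "has_bochner_integral (lborel \<Otimes>\<^sub>M lborel)
      (\<lambda>z. (G (fst z) * E (snd z) + E (fst z) * G (snd z) - D z - D (snd z, fst z)) / 2)
      ((g * (-1 / a) + (-1 / a) * g - g * (-1 / (2 * a)) - g * (-1 / (2 * a))) / 2)"
    using a g nonneg nnE nnG nnD nnD_swap
    by (intro has_bochner_integral_divide_zero has_bochner_integral_diff has_bochner_integral_add
        lborel_pair.has_bochner_integral_fst_snd_times has_bochner_integral_nn_integral)
      (auto simp: divide_nonneg_neg)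
  have kernel: "exp_cov_kernel a H
      = (\<lambda>z. (G (fst z) * E (snd z) + E (fst z) * G (snd z) - D z - D (snd z, fst z)) / 2)"
    unfolding fun_eq_iff by (auto simp: exp_cov_kernel_def rosen_cov_def G_def E_def D_def p_def exp_add
        abs_if field_simps split: split_indicator)
  have total: "(g * (-1 / a) + (-1 / a) * g - g * (-1 / (2 * a)) - g * (-1 / (2 * a))) / 2
      = Gamma (2 * H + 1) / (-a) powr (2 * H + 1) / (-2 * a)"
    using a by (simp add: g_def p_def field_simps)
  show ?thesis
    using pieces unfolding kernel total .
qed

lemma tendsto_integral_exp_cov_kernel_square:
  assumes a: "a < 0" and H: "0 < H"
  shows "((\<lambda>t. \<integral>z. indicator ({0..t} \<times> {0..t}) z * exp_cov_kernel a H z \<partial>(lborel \<Otimes>\<^sub>M lborel))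
           \<longlongrightarrow> Gamma (2 * H + 1) / (-a) powr (2 * H + 1) / (-2 * a)) at_top"
proof -
  note kernel = has_bochner_integral_exp_cov_kernel[OF a H, unfolded has_bochner_integral_iff]
  have "((\<lambda>t. \<integral>z. indicator ({0..t} \<times> {0..t}) z * exp_cov_kernel a H z \<partial>(lborel \<Otimes>\<^sub>M lborel))
      \<longlongrightarrow> (\<integral>z. exp_cov_kernel a H z \<partial>(lborel \<Otimes>\<^sub>M lborel))) at_top"
  proof (rule integral_dominated_convergence_at_top[where w = "exp_cov_kernel a H"])
    show "AE z in lborel \<Otimes>\<^sub>M lborel.
        ((\<lambda>t. indicator ({0..t} \<times> {0..t}) z * exp_cov_kernel a H z) \<longlongrightarrow> exp_cov_kernel a H z) at_top"
    proof (rule AE_I2, rule tendsto_eventually)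
      fix z :: "real \<times> real"
      show "\<forall>\<^sub>F t in at_top. indicator ({0..t} \<times> {0..t}) z * exp_cov_kernel a H z = exp_cov_kernel a H z"
        using eventually_ge_at_top[of "\<bar>fst z\<bar> + \<bar>snd z\<bar>"]
        by eventually_elim (auto simp: exp_cov_kernel_def mem_Times_iff split: split_indicator)
    qed
    show "\<forall>\<^sub>F t in at_top. AE z in lborel \<Otimes>\<^sub>M lborel.
        norm (indicator ({0..t} \<times> {0..t}) z * exp_cov_kernel a H z) \<le> exp_cov_kernel a H z"
      using exp_cov_kernel_nonneg[OF H] by (auto split: split_indicator)
  qed (use kernel in auto)
  then show ?thesis
    using kernel by simp
qed

lemma integral_exp_cov_kernel_square_le:
  assumes a: "a < 0" and H: "0 < H"
  shows "(\<integral>z. indicator ({0..t} \<times> {0..t}) z * exp_cov_kernel a H z \<partial>(lborel \<Otimes>\<^sub>M lborel))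
           \<le> Gamma (2 * H + 1) / (-a) powr (2 * H + 1) / (-2 * a)"
proof -
  note kernel = has_bochner_integral_exp_cov_kernel[OF a H, unfolded has_bochner_integral_iff]
  have "(\<integral>z. indicator ({0..t} \<times> {0..t}) z * exp_cov_kernel a H z \<partial>(lborel \<Otimes>\<^sub>M lborel))
      \<le> (\<integral>z. exp_cov_kernel a H z \<partial>(lborel \<Otimes>\<^sub>M lborel))"
    using exp_cov_kernel_nonneg[OF H] kernel
    by (intro integral_mono_AE') (auto split: split_indicator)
  then show ?thesis
    using kernel by simp
qed

section \<open>Joint measurability and Fubini for time integrals of processes\<close>

lemma tendsto_floor_mult_divide:
  fixes t :: real
  shows "(\<lambda>n. real_of_int \<lfloor>real (Suc n) * t\<rfloor> / real (Suc n)) \<longlonglongrightarrow> t"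
proof (rule tendsto_sandwich[where f = "\<lambda>n. t - 1 / real (Suc n)" and h = "\<lambda>n. t"])
  have "t - 1 / N \<le> real_of_int \<lfloor>N * t\<rfloor> / N" "real_of_int \<lfloor>N * t\<rfloor> / N \<le> t"
    if "N > 0" for N :: real
  proof -
    have e1: "(N * t - 1) / N = t - 1 / N" and e2: "N * t / N = t"
      using that by (simp_all add: field_simps)
    have "(N * t - 1) / N \<le> real_of_int \<lfloor>N * t\<rfloor> / N"
      using real_of_int_floor_gt_diff_one[of "N * t"] that by (intro divide_right_mono) auto
    moreover have "real_of_int \<lfloor>N * t\<rfloor> / N \<le> N * t / N"
      using that by (intro divide_right_mono) auto
    ultimately show "t - 1 / N \<le> real_of_int \<lfloor>N * t\<rfloor> / N" "real_of_int \<lfloor>N * t\<rfloor> / N \<le> t"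
      unfolding e1 e2 .
  qed
  then show "\<forall>\<^sub>F n in sequentially. t - 1 / real (Suc n) \<le> real_of_int \<lfloor>real (Suc n) * t\<rfloor> / real (Suc n)"
    and "\<forall>\<^sub>F n in sequentially. real_of_int \<lfloor>real (Suc n) * t\<rfloor> / real (Suc n) \<le> t"
    by (simp_all del: of_nat_Suc)
  show "(\<lambda>n. t - 1 / real (Suc n)) \<longlonglongrightarrow> t"
    using tendsto_diff[OF tendsto_const LIMSEQ_Suc[OF lim_const_over_n[of 1]], of t] by simp
qed simp

text \<open>The process is the pointwise limit of its discretisations on the grids \<open>\<int> / (n + 1)\<close>.\<close>

lemma borel_measurable_continuous_paths:
  fixes X :: "real \<Rightarrow> 'a \<Rightarrow> real"
  assumes meas: "\<And>t. X t \<in> borel_measurable M"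
    and cont: "\<And>\<omega>. \<omega> \<in> space M \<Longrightarrow> continuous_on UNIV (\<lambda>t. X t \<omega>)"
  shows "(\<lambda>(t, \<omega>). X t \<omega>) \<in> borel_measurable (lborel \<Otimes>\<^sub>M M)"
proof (rule borel_measurable_LIMSEQ_real[where u = "\<lambda>n z. X (real_of_int \<lfloor>real (Suc n) * fst z\<rfloor> / real (Suc n)) (snd z)"])
  fix z :: "real \<times> 'a"
  assume "z \<in> space (lborel \<Otimes>\<^sub>M M)"
  then have "snd z \<in> space M"
    by (auto simp: space_pair_measure)
  then show "(\<lambda>n. X (real_of_int \<lfloor>real (Suc n) * fst z\<rfloor> / real (Suc n)) (snd z)) \<longlonglongrightarrow> (case z of (t, \<omega>) \<Rightarrow> X t \<omega>)"
    using continuous_on_tendsto_compose[OF cont tendsto_floor_mult_divide[of "fst z"]]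
    by (cases z) auto
next
  fix n :: nat
  show "(\<lambda>z. X (real_of_int \<lfloor>real (Suc n) * fst z\<rfloor> / real (Suc n)) (snd z)) \<in> borel_measurable (lborel \<Otimes>\<^sub>M M)"
  proof (rule measurable_compose_countable'[where I = UNIV and g = "\<lambda>z. \<lfloor>real (Suc n) * fst z\<rfloor>"
        and f = "\<lambda>i z. X (real_of_int i / real (Suc n)) (snd z)"])
    show "(\<lambda>z. X (real_of_int i / real (Suc n)) (snd z)) \<in> borel_measurable (lborel \<Otimes>\<^sub>M M)" for i
      using measurable_compose[OF measurable_snd meas] by simp
  qed auto
qed

lemma Fubini_integral_abs_finite:
  fixes F :: "'b \<Rightarrow> 'a \<Rightarrow> real"
  assumes "sigma_finite_measure N" "sigma_finite_measure M"
    and meas: "(\<lambda>(y, \<omega>). F y \<omega>) \<in> borel_measurable (N \<Otimes>\<^sub>M M)"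
    and finite: "(\<integral>\<^sup>+y. \<integral>\<^sup>+\<omega>. ennreal \<bar>F y \<omega>\<bar> \<partial>M \<partial>N) < \<infinity>"
  shows "integrable M (\<lambda>\<omega>. \<integral>y. F y \<omega> \<partial>N)"
    and "(\<integral>\<omega>. (\<integral>y. F y \<omega> \<partial>N) \<partial>M) = (\<integral>y. (\<integral>\<omega>. F y \<omega> \<partial>M) \<partial>N)"
proof -
  interpret pair_sigma_finite N M
    using assms by (simp add: pair_sigma_finite_def)
  have "integrable (N \<Otimes>\<^sub>M M) (\<lambda>(y, \<omega>). F y \<omega>)"
  proof (rule integrableI_bounded)
    have "(\<integral>\<^sup>+z. ennreal (norm (case z of (y, \<omega>) \<Rightarrow> F y \<omega>)) \<partial>(N \<Otimes>\<^sub>M M))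
        = (\<integral>\<^sup>+y. \<integral>\<^sup>+\<omega>. ennreal \<bar>F y \<omega>\<bar> \<partial>M \<partial>N)"
      by (subst M2.nn_integral_fst[symmetric]) (use meas in auto)
    then show "(\<integral>\<^sup>+z. ennreal (norm (case z of (y, \<omega>) \<Rightarrow> F y \<omega>)) \<partial>(N \<Otimes>\<^sub>M M)) < \<infinity>"
      using finite by simp
  qed (rule meas)
  then show "integrable M (\<lambda>\<omega>. \<integral>y. F y \<omega> \<partial>N)"
    and "(\<integral>\<omega>. (\<integral>y. F y \<omega> \<partial>N) \<partial>M) = (\<integral>y. (\<integral>\<omega>. F y \<omega> \<partial>M) \<partial>N)"
    by (simp_all add: integrable_snd Fubini_integral)
qed

lemma abs_mult_le_sum_squares:
  fixes x y :: real
  shows "\<bar>x * y\<bar> \<le> x\<^sup>2 + y\<^sup>2"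
proof -
  have "2 * \<bar>x\<bar> * \<bar>y\<bar> \<le> x\<^sup>2 + y\<^sup>2" "0 \<le> \<bar>x\<bar> * \<bar>y\<bar>"
    using sum_squares_bound[of "\<bar>x\<bar>" "\<bar>y\<bar>"] by simp_all
  then show ?thesis
    unfolding abs_mult by linarith
qed

lemma nn_integral_abs_mult_le:
  fixes f g :: "'a \<Rightarrow> real"
  assumes [measurable]: "f \<in> borel_measurable M" "g \<in> borel_measurable M"
    and f: "(\<integral>\<^sup>+\<omega>. ennreal ((f \<omega>)\<^sup>2) \<partial>M) \<le> ennreal C" and g: "(\<integral>\<^sup>+\<omega>. ennreal ((g \<omega>)\<^sup>2) \<partial>M) \<le> ennreal C"
  shows "(\<integral>\<^sup>+\<omega>. ennreal \<bar>f \<omega> * g \<omega>\<bar> \<partial>M) \<le> ennreal (2 * max C 0)"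
proof -
  have "(\<integral>\<^sup>+\<omega>. ennreal \<bar>f \<omega> * g \<omega>\<bar> \<partial>M) \<le> (\<integral>\<^sup>+\<omega>. ennreal ((f \<omega>)\<^sup>2) + ennreal ((g \<omega>)\<^sup>2) \<partial>M)"
    using abs_mult_le_sum_squares
    by (intro nn_integral_mono) (simp add: ennreal_plus[symmetric] del: ennreal_plus)
  also have "\<dots> = (\<integral>\<^sup>+\<omega>. ennreal ((f \<omega>)\<^sup>2) \<partial>M) + (\<integral>\<^sup>+\<omega>. ennreal ((g \<omega>)\<^sup>2) \<partial>M)"
    by (rule nn_integral_add) auto
  also have "\<dots> \<le> ennreal C + ennreal C"
    using f g by (rule add_mono)
  also have "\<dots> \<le> ennreal (2 * max C 0)"
    by (simp add: ennreal_plus[symmetric] ennreal_neg max_def del: ennreal_plus)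
  finally show ?thesis .
qed

lemma Fubini_integral_mult:
  fixes F :: "real \<Rightarrow> 'a \<Rightarrow> real" and X :: "'a \<Rightarrow> real"
  assumes "sigma_finite_measure M"
    and meas_F: "(\<lambda>(s, \<omega>). F s \<omega>) \<in> borel_measurable (lborel \<Otimes>\<^sub>M M)"
    and meas_X: "X \<in> borel_measurable M"
    and supp: "\<And>s \<omega>. s \<notin> {0..T} \<Longrightarrow> F s \<omega> = 0"
    and bound_F: "\<And>s. (\<integral>\<^sup>+\<omega>. ennreal ((F s \<omega>)\<^sup>2) \<partial>M) \<le> ennreal C"
    and bound_X: "(\<integral>\<^sup>+\<omega>. ennreal ((X \<omega>)\<^sup>2) \<partial>M) \<le> ennreal C"
  shows "integrable M (\<lambda>\<omega>. (\<integral>s. F s \<omega> \<partial>lborel) * X \<omega>)"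
    and "(\<integral>\<omega>. (\<integral>s. F s \<omega> \<partial>lborel) * X \<omega> \<partial>M) = (\<integral>s. (\<integral>\<omega>. F s \<omega> * X \<omega> \<partial>M) \<partial>lborel)"
proof -
  have meas: "(\<lambda>(s, \<omega>). F s \<omega> * X \<omega>) \<in> borel_measurable (lborel \<Otimes>\<^sub>M M)"
    using borel_measurable_times[OF meas_F measurable_compose[OF measurable_snd meas_X]]
    by (simp add: case_prod_beta')
  have "(\<integral>\<^sup>+\<omega>. ennreal \<bar>F s \<omega> * X \<omega>\<bar> \<partial>M) \<le> ennreal (2 * max C 0) * indicator {0..T} s" for s
    using nn_integral_abs_mult_le[OF _ meas_X bound_F bound_X] measurable_Pair2[OF meas_F] supp
    by (cases "s \<in> {0..T}") auto
  then have "(\<integral>\<^sup>+s. \<integral>\<^sup>+\<omega>. ennreal \<bar>F s \<omega> * X \<omega>\<bar> \<partial>M \<partial>lborel)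
      \<le> (\<integral>\<^sup>+s. ennreal (2 * max C 0) * indicator {0..T} s \<partial>lborel)"
    by (intro nn_integral_mono) simp
  also have "\<dots> < \<infinity>"
    by (simp add: nn_integral_cmult_indicator ennreal_mult_less_top emeasure_lborel_Icc_eq)
  finally show "integrable M (\<lambda>\<omega>. (\<integral>s. F s \<omega> \<partial>lborel) * X \<omega>)"
    and "(\<integral>\<omega>. (\<integral>s. F s \<omega> \<partial>lborel) * X \<omega> \<partial>M) = (\<integral>s. (\<integral>\<omega>. F s \<omega> * X \<omega> \<partial>M) \<partial>lborel)"
    using Fubini_integral_abs_finite[OF sigma_finite_lborel assms(1) meas] by simp_all
qed

lemma integral_fst_snd_times:
  fixes f g :: "real \<Rightarrow> real"
  assumes f: "integrable lborel f" and g: "integrable lborel g"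
  shows "(\<integral>z. f (fst z) * g (snd z) \<partial>(lborel \<Otimes>\<^sub>M lborel)) = (\<integral>s. f s \<partial>lborel) * (\<integral>u. g u \<partial>lborel)"
proof -
  have [measurable]: "f \<in> borel_measurable borel" "g \<in> borel_measurable borel"
    using f g by auto
  have int: "integrable (lborel \<Otimes>\<^sub>M lborel) (\<lambda>z. f (fst z) * g (snd z))"
    using f g by (intro lborel_pair.Fubini_integrable) (auto simp: abs_mult)
  have "(\<integral>z. f (fst z) * g (snd z) \<partial>(lborel \<Otimes>\<^sub>M lborel)) = (\<integral>s. (\<integral>u. f s * g u \<partial>lborel) \<partial>lborel)"
    using lborel_pair.integral_fst'[OF int] by simp
  then show ?thesis
    by simp
qed

lemma Fubini_integral_mult_integral:
  fixes F G :: "real \<Rightarrow> 'a \<Rightarrow> real"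
  assumes "sigma_finite_measure M"
    and meas_F: "(\<lambda>(s, \<omega>). F s \<omega>) \<in> borel_measurable (lborel \<Otimes>\<^sub>M M)"
    and meas_G: "(\<lambda>(s, \<omega>). G s \<omega>) \<in> borel_measurable (lborel \<Otimes>\<^sub>M M)"
    and int_F: "\<And>\<omega>. \<omega> \<in> space M \<Longrightarrow> integrable lborel (\<lambda>s. F s \<omega>)"
    and int_G: "\<And>\<omega>. \<omega> \<in> space M \<Longrightarrow> integrable lborel (\<lambda>s. G s \<omega>)"
    and supp_F: "\<And>s \<omega>. s \<notin> {0..T} \<Longrightarrow> F s \<omega> = 0"
    and supp_G: "\<And>s \<omega>. s \<notin> {0..T} \<Longrightarrow> G s \<omega> = 0"
    and bound_F: "\<And>s. (\<integral>\<^sup>+\<omega>. ennreal ((F s \<omega>)\<^sup>2) \<partial>M) \<le> ennreal C"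
    and bound_G: "\<And>s. (\<integral>\<^sup>+\<omega>. ennreal ((G s \<omega>)\<^sup>2) \<partial>M) \<le> ennreal C"
  shows "integrable M (\<lambda>\<omega>. (\<integral>s. F s \<omega> \<partial>lborel) * (\<integral>u. G u \<omega> \<partial>lborel))"
    and "(\<integral>\<omega>. (\<integral>s. F s \<omega> \<partial>lborel) * (\<integral>u. G u \<omega> \<partial>lborel) \<partial>M)
           = (\<integral>z. (\<integral>\<omega>. F (fst z) \<omega> * G (snd z) \<omega> \<partial>M) \<partial>(lborel \<Otimes>\<^sub>M lborel))"
proof -
  have "(\<lambda>x. F (fst (fst x)) (snd x)) \<in> borel_measurable ((lborel \<Otimes>\<^sub>M lborel) \<Otimes>\<^sub>M M)"
    "(\<lambda>x. G (snd (fst x)) (snd x)) \<in> borel_measurable ((lborel \<Otimes>\<^sub>M lborel) \<Otimes>\<^sub>M M)"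
  proof -
    have p1: "(\<lambda>x. (fst (fst x), snd x)) \<in> (lborel \<Otimes>\<^sub>M lborel) \<Otimes>\<^sub>M M \<rightarrow>\<^sub>M lborel \<Otimes>\<^sub>M M"
      and p2: "(\<lambda>x. (snd (fst x), snd x)) \<in> (lborel \<Otimes>\<^sub>M lborel) \<Otimes>\<^sub>M M \<rightarrow>\<^sub>M lborel \<Otimes>\<^sub>M M"
      by measurable
    show "(\<lambda>x. F (fst (fst x)) (snd x)) \<in> borel_measurable ((lborel \<Otimes>\<^sub>M lborel) \<Otimes>\<^sub>M M)"
      using measurable_compose[OF p1 meas_F] by simp
    show "(\<lambda>x. G (snd (fst x)) (snd x)) \<in> borel_measurable ((lborel \<Otimes>\<^sub>M lborel) \<Otimes>\<^sub>M M)"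
      using measurable_compose[OF p2 meas_G] by simp
  qed
  then have meas: "(\<lambda>(z, \<omega>). F (fst z) \<omega> * G (snd z) \<omega>) \<in> borel_measurable ((lborel \<Otimes>\<^sub>M lborel) \<Otimes>\<^sub>M M)"
    unfolding case_prod_beta' by (rule borel_measurable_times)
  have "(\<integral>\<^sup>+\<omega>. ennreal \<bar>F (fst z) \<omega> * G (snd z) \<omega>\<bar> \<partial>M) \<le> ennreal (2 * max C 0) * indicator ({0..T} \<times> {0..T}) z"
    for z
    using nn_integral_abs_mult_le[OF _ _ bound_F bound_G] measurable_Pair2[OF meas_F] measurable_Pair2[OF meas_G]
      supp_F supp_G
    by (cases "z \<in> {0..T} \<times> {0..T}") (auto simp: mem_Times_iff)
  then have "(\<integral>\<^sup>+z. \<integral>\<^sup>+\<omega>. ennreal \<bar>F (fst z) \<omega> * G (snd z) \<omega>\<bar> \<partial>M \<partial>(lborel \<Otimes>\<^sub>M lborel))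
      \<le> (\<integral>\<^sup>+z. ennreal (2 * max C 0) * indicator ({0..T} \<times> {0..T}) z \<partial>(lborel \<Otimes>\<^sub>M lborel))"
    by (intro nn_integral_mono) simp
  also have "\<dots> < \<infinity>"
    by (simp add: nn_integral_cmult_indicator lborel.emeasure_pair_measure_Times ennreal_mult_less_top
        emeasure_lborel_Icc_eq)
  finally have "(\<integral>\<^sup>+z. \<integral>\<^sup>+\<omega>. ennreal \<bar>F (fst z) \<omega> * G (snd z) \<omega>\<bar> \<partial>M \<partial>(lborel \<Otimes>\<^sub>M lborel)) < \<infinity>" .
  note Fubini = Fubini_integral_abs_finite[OF lborel_pair.sigma_finite_measure_axioms assms(1) meas this]
  have product: "(\<integral>z. F (fst z) \<omega> * G (snd z) \<omega> \<partial>(lborel \<Otimes>\<^sub>M lborel)) = (\<integral>s. F s \<omega> \<partial>lborel) * (\<integral>u. G u \<omega> \<partial>lborel)"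
    if "\<omega> \<in> space M" for \<omega>
    using integral_fst_snd_times[OF int_F[OF that] int_G[OF that]] .
  show "integrable M (\<lambda>\<omega>. (\<integral>s. F s \<omega> \<partial>lborel) * (\<integral>u. G u \<omega> \<partial>lborel))"
    using Fubini(1) by (rule Bochner_Integration.integrable_cong[THEN iffD1, OF refl, rotated]) (simp add: product)
  have "(\<integral>\<omega>. (\<integral>s. F s \<omega> \<partial>lborel) * (\<integral>u. G u \<omega> \<partial>lborel) \<partial>M)
      = (\<integral>\<omega>. (\<integral>z. F (fst z) \<omega> * G (snd z) \<omega> \<partial>(lborel \<Otimes>\<^sub>M lborel)) \<partial>M)"
    by (rule Bochner_Integration.integral_cong) (simp_all add: product)
  also have "\<dots> = (\<integral>z. (\<integral>\<omega>. F (fst z) \<omega> * G (snd z) \<omega> \<partial>M) \<partial>(lborel \<Otimes>\<^sub>M lborel))"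
    by (rule Fubini(2))
  finally show "(\<integral>\<omega>. (\<integral>s. F s \<omega> \<partial>lborel) * (\<integral>u. G u \<omega> \<partial>lborel) \<partial>M)
      = (\<integral>z. (\<integral>\<omega>. F (fst z) \<omega> * G (snd z) \<omega> \<partial>M) \<partial>(lborel \<Otimes>\<^sub>M lborel))" .
qed

section \<open>Long-run time averages\<close>

definition limsup_time_average :: "(real \<Rightarrow> ennreal) \<Rightarrow> ennreal" where
  "limsup_time_average m = Limsup at_top (\<lambda>T. ennreal (1 / T) * (\<integral>\<^sup>+t. m t * indicator {0..T} t \<partial>lborel))"

lemma nn_integral_Icc_le_two_levels:
  assumes "0 \<le> T0" "T0 \<le> T" "0 \<le> B" "0 \<le> u"
    and low: "\<And>t. t \<in> {0..T0} \<Longrightarrow> m t \<le> ennreal B" and high: "\<And>t. T0 \<le> t \<Longrightarrow> m t \<le> ennreal u"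
  shows "(\<integral>\<^sup>+t. m t * indicator {0..T} t \<partial>lborel) \<le> ennreal (B * T0 + u * T)"
proof -
  have "m t \<le> ennreal B * indicator {0..T0} t + ennreal u" if "0 \<le> t" for t
    using low[of t] high[of t] that by (cases "t \<le> T0") (simp_all add: add_increasing add_increasing2)
  then have "(\<integral>\<^sup>+t. m t * indicator {0..T} t \<partial>lborel)
      \<le> (\<integral>\<^sup>+t. ennreal B * indicator {0..T0} t + ennreal u * indicator {0..T} t \<partial>lborel)"
    by (intro nn_integral_mono) (auto split: split_indicator)
  also have "\<dots> = ennreal (B * T0 + u * T)"
    using assms(1-4) by (simp add: nn_integral_add nn_integral_cmult_indicator ennreal_mult[symmetric]
        ennreal_plus[symmetric] del: ennreal_plus)
  finally show ?thesis .
qed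

lemma limsup_time_average_le:
  assumes ev: "\<forall>\<^sub>F t in at_top. m t \<le> ennreal u" and u: "0 \<le> u"
    and bounded: "\<And>T. \<exists>B. \<forall>t\<in>{0..T}. m t \<le> ennreal B"
  shows "limsup_time_average m \<le> ennreal u"
proof -
  obtain N where N: "\<And>t. N \<le> t \<Longrightarrow> m t \<le> ennreal u"
    using ev unfolding eventually_at_top_linorder by blast
  define T0 where "T0 = max N 0"
  obtain B0 where B0: "\<And>t. t \<in> {0..T0} \<Longrightarrow> m t \<le> ennreal B0"
    using bounded[of T0] by blast
  define B where "B = max B0 0"
  have T0: "0 \<le> T0" "\<And>t. T0 \<le> t \<Longrightarrow> m t \<le> ennreal u"
    and B: "0 \<le> B" "\<And>t. t \<in> {0..T0} \<Longrightarrow> m t \<le> ennreal B"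
    using N B0 unfolding T0_def B_def by (auto intro: order_trans ennreal_leI)
  have "\<forall>\<^sub>F T in at_top. ennreal (1 / T) * (\<integral>\<^sup>+t. m t * indicator {0..T} t \<partial>lborel) \<le> ennreal (B * T0 / T + u)"
    using eventually_gt_at_top[of T0]
  proof eventually_elim
    case (elim T)
    have "ennreal (1 / T) * (\<integral>\<^sup>+t. m t * indicator {0..T} t \<partial>lborel) \<le> ennreal (1 / T) * ennreal (B * T0 + u * T)"
      using nn_integral_Icc_le_two_levels[OF T0(1) _ B(1) u B(2) T0(2)] elim by (intro mult_left_mono) auto
    also have "\<dots> = ennreal (1 / T * (B * T0 + u * T))"
      by (rule ennreal_mult[symmetric]) (use B T0 elim u in auto)
    also have "1 / T * (B * T0 + u * T) = B * T0 / T + u"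
      using T0 elim by (simp add: field_simps)
    finally show ?case .
  qed
  then have "limsup_time_average m \<le> Limsup at_top (\<lambda>T. ennreal (B * T0 / T + u))"
    unfolding limsup_time_average_def by (rule Limsup_mono)
  also have "\<dots> = ennreal u"
  proof -
    have "((\<lambda>T. B * T0 / T + u) \<longlongrightarrow> u) at_top"
      by real_asymp
    then show ?thesis
      by (intro lim_imp_Limsup tendsto_ennrealI) simp_all
  qed
  finally show ?thesis .
qed

lemma limsup_time_average_ge:
  assumes ev: "\<forall>\<^sub>F t in at_top. ennreal l \<le> m t" and l: "0 \<le> l"
  shows "ennreal l \<le> limsup_time_average m"
proof -
  obtain N where N: "\<And>t. N \<le> t \<Longrightarrow> ennreal l \<le> m t"
    using ev unfolding eventually_at_top_linorder by blast
  define T0 where "T0 = max N 0"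
  have T0: "0 \<le> T0" "\<And>t. T0 \<le> t \<Longrightarrow> ennreal l \<le> m t"
    using N unfolding T0_def by auto
  have "\<forall>\<^sub>F T in at_top. ennreal (l * (T - T0) / T) \<le> ennreal (1 / T) * (\<integral>\<^sup>+t. m t * indicator {0..T} t \<partial>lborel)"
    using eventually_gt_at_top[of T0]
  proof eventually_elim
    case (elim T)
    have "ennreal (l * (T - T0)) = (\<integral>\<^sup>+t. ennreal l * indicator {T0..T} t \<partial>lborel)"
      using elim l by (simp add: nn_integral_cmult_indicator ennreal_mult)
    also have "\<dots> \<le> (\<integral>\<^sup>+t. m t * indicator {0..T} t \<partial>lborel)"
      using T0 by (intro nn_integral_mono) (auto split: split_indicator)
    finally have "ennreal (1 / T) * ennreal (l * (T - T0)) \<le> ennreal (1 / T) * (\<integral>\<^sup>+t. m t * indicator {0..T} t \<partial>lborel)"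
      by (rule mult_left_mono) simp
    moreover have "ennreal (1 / T) * ennreal (l * (T - T0)) = ennreal (l * (T - T0) / T)"
      using elim l T0 by (simp add: ennreal_mult[symmetric])
    ultimately show ?case
      by simp
  qed
  then have "Limsup at_top (\<lambda>T. ennreal (l * (T - T0) / T)) \<le> limsup_time_average m"
    unfolding limsup_time_average_def by (rule Limsup_mono)
  moreover have "Limsup at_top (\<lambda>T. ennreal (l * (T - T0) / T)) = ennreal l"
  proof -
    have "((\<lambda>T. l * (T - T0) / T) \<longlongrightarrow> l) at_top"
      by real_asymp
    then show ?thesis
      by (intro lim_imp_Limsup tendsto_ennrealI) simp_all
  qed
  ultimately show ?thesis
    by simp
qed

lemma limsup_time_average_tendsto:
  fixes f :: "real \<Rightarrow> real"
  assumes lim: "(f \<longlongrightarrow> L) at_top" and L: "0 \<le> L"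
    and bounded: "\<And>T. \<exists>B. \<forall>t\<in>{0..T}. f t \<le> B"
  shows "limsup_time_average (\<lambda>t. ennreal (f t)) = ennreal L"
proof (rule antisym)
  have bounded': "\<exists>B. \<forall>t\<in>{0..T}. ennreal (f t) \<le> ennreal B" for T
    using bounded[of T] by (meson ennreal_leI)
  show "limsup_time_average (\<lambda>t. ennreal (f t)) \<le> ennreal L"
  proof (rule ennreal_le_epsilon)
    fix e :: real
    assume "0 < e"
    then have "\<forall>\<^sub>F t in at_top. f t < L + e"
      using order_tendstoD(2)[OF lim, of "L + e"] by simp
    then have "\<forall>\<^sub>F t in at_top. ennreal (f t) \<le> ennreal (L + e)"
      by eventually_elim (simp add: ennreal_leI)
    then have "limsup_time_average (\<lambda>t. ennreal (f t)) \<le> ennreal (L + e)"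
      using \<open>0 < e\<close> L bounded' by (intro limsup_time_average_le) auto
    then show "limsup_time_average (\<lambda>t. ennreal (f t)) \<le> ennreal L + ennreal e"
      using \<open>0 < e\<close> L by (simp add: ennreal_plus)
  qed
  show "ennreal L \<le> limsup_time_average (\<lambda>t. ennreal (f t))"
  proof (cases "L = 0")
    case False
    show ?thesis
    proof (rule dense_le_bounded)
      show "0 < ennreal L"
        using L False by simp
      fix w
      assume "0 < w" "w < ennreal L"
      then obtain l where l: "w = ennreal l" "0 \<le> l" "l < L"
        by (cases w rule: ennreal_cases) (auto simp: ennreal_less_iff)
      have "\<forall>\<^sub>F t in at_top. l < f t"
        using order_tendstoD(1)[OF lim, of l] l by simp
      then have "\<forall>\<^sub>F t in at_top. ennreal l \<le> ennreal (f t)"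
        by eventually_elim (simp add: ennreal_leI)
      then show "w \<le> limsup_time_average (\<lambda>t. ennreal (f t))"
        unfolding l(1) using l(2) by (rule limsup_time_average_ge)
    qed
  qed simp
qed

lemma limsup_time_average_cong:
  assumes "\<And>t. 0 \<le> t \<Longrightarrow> m t = m' t"
  shows "limsup_time_average m = limsup_time_average m'"
proof -
  have "m t * indicator {0..T} t = m' t * indicator {0..T} t" for t T :: real
    using assms by (auto split: split_indicator)
  then show ?thesis
    unfolding limsup_time_average_def by simp
qed

section \<open>The driving process and the pathwise solution\<close>

locale rosenblatt_like_process = prob_space M for M :: "'a measure" +
  fixes H :: real and R :: "real \<Rightarrow> 'a \<Rightarrow> real"
  assumes H_pos: "0 < H"
    and R_measurable: "\<And>t. R t \<in> borel_measurable M"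
    and R_continuous: "\<And>\<omega>. \<omega> \<in> space M \<Longrightarrow> continuous_on {0..} (\<lambda>t. R t \<omega>)"
    and R_square_integrable: "\<And>t. t \<ge> 0 \<Longrightarrow> integrable M (\<lambda>\<omega>. (R t \<omega>)\<^sup>2)"
    and R_mean: "\<And>t. t \<ge> 0 \<Longrightarrow> (\<integral>\<omega>. R t \<omega> \<partial>M) = 0"
    and R_cov: "\<And>t s. t \<ge> 0 \<Longrightarrow> s \<ge> 0 \<Longrightarrow> (\<integral>\<omega>. R t \<omega> * R s \<omega> \<partial>M) = rosen_cov H t s"

lemma rosenblatt_like_process_if_rosenblatt_like:
  "rosenblatt_like M H R \<Longrightarrow> 0 < H \<Longrightarrow> rosenblatt_like_process M H R"
  unfolding rosenblatt_like_def rosenblatt_like_process_def rosenblatt_like_process_axioms_def by auto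

lemma rosen_cov_self: "rosen_cov H t t = t powr (2 * H)"
  unfolding rosen_cov_def by simp

context rosenblatt_like_process
begin

text \<open>Extending \<open>R\<close> constantly to negative times lets all time integrals be taken over the
  whole line.\<close>

definition Rext :: "real \<Rightarrow> 'a \<Rightarrow> real" where
  "Rext s \<omega> = R (max s 0) \<omega>"

lemma Rext_measurable [measurable]: "Rext s \<in> borel_measurable M"
  unfolding Rext_def using R_measurable by simp

lemma Rext_continuous: "\<omega> \<in> space M \<Longrightarrow> continuous_on UNIV (\<lambda>s. Rext s \<omega>)"
  unfolding Rext_def by (rule continuous_on_compose2[OF R_continuous]) (auto intro!: continuous_intros)

lemma Rext_joint_measurable [measurable]: "(\<lambda>(s, \<omega>). Rext s \<omega>) \<in> borel_measurable (lborel \<Otimes>\<^sub>M M)"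
  by (rule borel_measurable_continuous_paths) (use Rext_continuous in auto)

lemma integrable_Rext_sq: "integrable M (\<lambda>\<omega>. (Rext s \<omega>)\<^sup>2)"
  unfolding Rext_def using R_square_integrable[of "max s 0"] by simp

lemma integrable_Rext_mult: "integrable M (\<lambda>\<omega>. Rext s \<omega> * Rext u \<omega>)"
proof (rule Bochner_Integration.integrable_bound)
  show "integrable M (\<lambda>\<omega>. (Rext s \<omega>)\<^sup>2 + (Rext u \<omega>)\<^sup>2)"
    using integrable_Rext_sq by auto
  show "AE \<omega> in M. norm (Rext s \<omega> * Rext u \<omega>) \<le> norm ((Rext s \<omega>)\<^sup>2 + (Rext u \<omega>)\<^sup>2)"
    using abs_mult_le_sum_squares by (intro AE_I2) simp
qed simp

lemma integrable_Rext: "integrable M (Rext s)"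
proof (rule Bochner_Integration.integrable_bound)
  show "integrable M (\<lambda>\<omega>. 1 + (Rext s \<omega>)\<^sup>2)"
    using integrable_Rext_sq by auto
  show "AE \<omega> in M. norm (Rext s \<omega>) \<le> norm (1 + (Rext s \<omega>)\<^sup>2)"
    using abs_mult_le_sum_squares[of "Rext s \<omega>" 1 for \<omega>] by (intro AE_I2) (simp add: add.commute)
qed simp

lemma integral_Rext: "(\<integral>\<omega>. Rext s \<omega> \<partial>M) = 0"
  unfolding Rext_def using R_mean[of "max s 0"] by simp

lemma integral_Rext_mult: "(\<integral>\<omega>. Rext s \<omega> * Rext u \<omega> \<partial>M) = rosen_cov H (max s 0) (max u 0)"
  unfolding Rext_def using R_cov[of "max s 0" "max u 0"] by simp

lemma nn_integral_Rext_sq: "(\<integral>\<^sup>+\<omega>. ennreal ((Rext s \<omega>)\<^sup>2) \<partial>M) = ennreal (max s 0 powr (2 * H))"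
  using nn_integral_eq_integral[OF integrable_Rext_sq] integral_Rext_mult[of s s]
  by (simp add: power2_eq_square rosen_cov_self)

lemma integral_Rext_diff_mult:
  shows "integrable M (\<lambda>\<omega>. (Rext a \<omega> - Rext b \<omega>) * (Rext c \<omega> - Rext d \<omega>))"
    and "(\<integral>\<omega>. (Rext a \<omega> - Rext b \<omega>) * (Rext c \<omega> - Rext d \<omega>) \<partial>M)
           = rosen_cov H (max a 0) (max c 0) - rosen_cov H (max a 0) (max d 0)
             - rosen_cov H (max b 0) (max c 0) + rosen_cov H (max b 0) (max d 0)"
proof -
  have expand: "(\<lambda>\<omega>. (Rext a \<omega> - Rext b \<omega>) * (Rext c \<omega> - Rext d \<omega>))
      = (\<lambda>\<omega>. Rext a \<omega> * Rext c \<omega> - Rext a \<omega> * Rext d \<omega> - Rext b \<omega> * Rext c \<omega> + Rext b \<omega> * Rext d \<omega>)"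
    by (auto simp: algebra_simps)
  show "integrable M (\<lambda>\<omega>. (Rext a \<omega> - Rext b \<omega>) * (Rext c \<omega> - Rext d \<omega>))"
    unfolding expand by (intro Bochner_Integration.integrable_add Bochner_Integration.integrable_diff
        integrable_Rext_mult)
  show "(\<integral>\<omega>. (Rext a \<omega> - Rext b \<omega>) * (Rext c \<omega> - Rext d \<omega>) \<partial>M)
      = rosen_cov H (max a 0) (max c 0) - rosen_cov H (max a 0) (max d 0)
        - rosen_cov H (max b 0) (max c 0) + rosen_cov H (max b 0) (max d 0)"
    unfolding expand by (simp add: integrable_Rext_mult integral_Rext_mult)
qed

lemma integral_Rext_increment_mult:
  assumes "0 \<le> v" "v \<le> t" "0 \<le> w" "w \<le> t"
  shows "(\<integral>\<omega>. (Rext t \<omega> - Rext (t - v) \<omega>) * (Rext t \<omega> - Rext (t - w) \<omega>) \<partial>M) = rosen_cov H v w"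
proof -
  have "max t 0 = t" "max (t - v) 0 = t - v" "max (t - w) 0 = t - w"
    "\<bar>t - (t - w)\<bar> = w" "\<bar>t - v - t\<bar> = v" "\<bar>t - v - (t - w)\<bar> = \<bar>v - w\<bar>"
    using assms by auto
  then show ?thesis
    unfolding integral_Rext_diff_mult(2) rosen_cov_def by (simp add: field_simps)
qed

lemma integral_Rext_increment_mult_Rext:
  assumes "0 \<le> v" "v \<le> t"
  shows "(\<integral>\<omega>. (Rext t \<omega> - Rext (t - v) \<omega>) * Rext t \<omega> \<partial>M) = t powr (2 * H) - rosen_cov H (t - v) t"
proof -
  have "(\<lambda>\<omega>. (Rext t \<omega> - Rext (t - v) \<omega>) * Rext t \<omega>) = (\<lambda>\<omega>. Rext t \<omega> * Rext t \<omega> - Rext (t - v) \<omega> * Rext t \<omega>)"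
    by (auto simp: algebra_simps)
  moreover have "max t 0 = t" "max (t - v) 0 = t - v"
    using assms by auto
  ultimately show ?thesis
    by (simp add: integrable_Rext_mult integral_Rext_mult rosen_cov_self)
qed

lemma nn_integral_Rext_increment_sq:
  assumes "0 \<le> v" "v \<le> t"
  shows "(\<integral>\<^sup>+\<omega>. ennreal ((Rext t \<omega> - Rext (t - v) \<omega>)\<^sup>2) \<partial>M) = ennreal (v powr (2 * H))"
  using nn_integral_eq_integral[OF integral_Rext_diff_mult(1)[of t "t - v" t "t - v"]]
    integral_Rext_increment_mult[OF assms assms]
  by (simp add: power2_eq_square rosen_cov_self)

definition incr_kernel :: "real \<Rightarrow> real \<Rightarrow> real \<Rightarrow> 'a \<Rightarrow> real" where
  "incr_kernel a t v \<omega> = indicator {0..t} v * exp (a * v) * (Rext t \<omega> - Rext (t - v) \<omega>)"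

definition incr_integral :: "real \<Rightarrow> real \<Rightarrow> 'a \<Rightarrow> real" where
  "incr_integral a t \<omega> = (\<integral>v. incr_kernel a t v \<omega> \<partial>lborel)"

definition conv_kernel :: "real \<Rightarrow> real \<Rightarrow> real \<Rightarrow> 'a \<Rightarrow> real" where
  "conv_kernel a t s \<omega> = indicator {0..t} s * (exp (a * (t - s)) * Rext s \<omega>)"

definition conv_integral :: "real \<Rightarrow> real \<Rightarrow> 'a \<Rightarrow> real" where
  "conv_integral a t \<omega> = (\<integral>s. conv_kernel a t s \<omega> \<partial>lborel)"

lemma incr_kernel_measurable [measurable]:
  "(\<lambda>(v, \<omega>). incr_kernel a t v \<omega>) \<in> borel_measurable (lborel \<Otimes>\<^sub>M M)"
  unfolding incr_kernel_def by measurable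

lemma conv_kernel_measurable [measurable]:
  "(\<lambda>(s, \<omega>). conv_kernel a t s \<omega>) \<in> borel_measurable (lborel \<Otimes>\<^sub>M M)"
  unfolding conv_kernel_def by measurable

lemma conv_integral_measurable [measurable]: "conv_integral a t \<in> borel_measurable M"
  unfolding conv_integral_def conv_kernel_def by measurable

lemma integrable_incr_kernel: "\<omega> \<in> space M \<Longrightarrow> integrable lborel (\<lambda>v. incr_kernel a t v \<omega>)"
proof -
  assume \<omega>: "\<omega> \<in> space M"
  have "continuous_on UNIV (\<lambda>v. Rext (t - v) \<omega>)"
    by (rule continuous_on_compose2[OF Rext_continuous[OF \<omega>]]) (auto intro!: continuous_intros)
  then have "continuous_on {0..t} (\<lambda>v. exp (a * v) * (Rext t \<omega> - Rext (t - v) \<omega>))"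
    by (auto intro!: continuous_intros intro: continuous_on_subset)
  from borel_integrable_compact[OF compact_Icc this] show ?thesis
    by (simp add: incr_kernel_def mult.assoc)
qed

lemma integrable_conv_kernel: "\<omega> \<in> space M \<Longrightarrow> integrable lborel (\<lambda>s. conv_kernel a t s \<omega>)"
proof -
  assume \<omega>: "\<omega> \<in> space M"
  have "continuous_on {0..t} (\<lambda>s. exp (a * (t - s)) * Rext s \<omega>)"
    using continuous_on_subset[OF Rext_continuous[OF \<omega>]] by (auto intro!: continuous_intros)
  from borel_integrable_compact[OF compact_Icc this] show ?thesis
    by (simp add: conv_kernel_def)
qed

lemma incr_kernel_outside: "v \<notin> {0..t} \<Longrightarrow> incr_kernel a t v \<omega> = 0"
  unfolding incr_kernel_def by simp

lemma conv_kernel_outside: "s \<notin> {0..t} \<Longrightarrow> conv_kernel a t s \<omega> = 0"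
  unfolding conv_kernel_def by simp

lemma nn_integral_incr_kernel_sq_le:
  assumes "a \<le> 0" "0 \<le> t"
  shows "(\<integral>\<^sup>+\<omega>. ennreal ((incr_kernel a t v \<omega>)\<^sup>2) \<partial>M) \<le> ennreal (t powr (2 * H))"
proof (cases "v \<in> {0..t}")
  case True
  have "(exp (a * v))\<^sup>2 \<le> 1"
    using assms True by (simp add: power_le_one mult_nonpos_nonneg)
  then have "(incr_kernel a t v \<omega>)\<^sup>2 \<le> (Rext t \<omega> - Rext (t - v) \<omega>)\<^sup>2" for \<omega>
    using True mult_right_mono[of "(exp (a * v))\<^sup>2" 1 "(Rext t \<omega> - Rext (t - v) \<omega>)\<^sup>2"]
    by (simp add: incr_kernel_def power_mult_distrib)
  then have "(\<integral>\<^sup>+\<omega>. ennreal ((incr_kernel a t v \<omega>)\<^sup>2) \<partial>M)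
      \<le> (\<integral>\<^sup>+\<omega>. ennreal ((Rext t \<omega> - Rext (t - v) \<omega>)\<^sup>2) \<partial>M)"
    by (intro nn_integral_mono ennreal_leI)
  also have "\<dots> = ennreal (v powr (2 * H))"
    using True by (simp add: nn_integral_Rext_increment_sq)
  also have "\<dots> \<le> ennreal (t powr (2 * H))"
    using True H_pos by (intro ennreal_leI powr_mono2) auto
  finally show ?thesis .
qed (simp add: incr_kernel_outside)

lemma nn_integral_conv_kernel_sq_le:
  assumes "0 \<le> a" "0 \<le> t"
  shows "(\<integral>\<^sup>+\<omega>. ennreal ((conv_kernel a t s \<omega>)\<^sup>2) \<partial>M) \<le> ennreal (exp (2 * a * t) * t powr (2 * H))"
proof (cases "s \<in> {0..t}")
  case True
  have "(exp (a * (t - s)))\<^sup>2 \<le> exp (2 * a * t)"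
    using assms True by (simp add: exp_double[symmetric] mult_left_mono)
  then have "(conv_kernel a t s \<omega>)\<^sup>2 \<le> exp (2 * a * t) * (Rext s \<omega>)\<^sup>2" for \<omega>
    using True mult_right_mono[of "(exp (a * (t - s)))\<^sup>2" "exp (2 * a * t)" "(Rext s \<omega>)\<^sup>2"]
    by (simp add: conv_kernel_def power_mult_distrib)
  then have "(\<integral>\<^sup>+\<omega>. ennreal ((conv_kernel a t s \<omega>)\<^sup>2) \<partial>M) \<le> (\<integral>\<^sup>+\<omega>. ennreal (exp (2 * a * t)) * ennreal ((Rext s \<omega>)\<^sup>2) \<partial>M)"
    by (intro nn_integral_mono) (simp add: ennreal_mult[symmetric] ennreal_leI)
  also have "\<dots> = ennreal (exp (2 * a * t) * s powr (2 * H))"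
    using True by (simp add: nn_integral_cmult nn_integral_Rext_sq ennreal_mult)
  also have "\<dots> \<le> ennreal (exp (2 * a * t) * t powr (2 * H))"
    using True H_pos by (intro ennreal_leI mult_left_mono powr_mono2) auto
  finally show ?thesis .
qed (simp add: conv_kernel_outside)

lemma lin_sol_conv_integral:
  assumes \<omega>: "\<omega> \<in> space M" and t: "0 \<le> t"
  shows "lin_sol R x0 a t \<omega> = exp (a * t) * x0 + Rext t \<omega> + a * conv_integral a t \<omega>"
proof -
  have "integral {0..t} (\<lambda>s. exp (a * (t - s)) * R s \<omega>) = integral {0..t} (\<lambda>s. exp (a * (t - s)) * Rext s \<omega>)"
    by (rule integral_cong) (auto simp: Rext_def)
  also have "\<dots> = (LINT s:{0..t}|lborel. exp (a * (t - s)) * Rext s \<omega>)"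
    using integrable_conv_kernel[OF \<omega>, of a t]
    by (intro set_borel_integral_eq_integral(2)[symmetric]) (simp add: set_integrable_def conv_kernel_def)
  also have "\<dots> = conv_integral a t \<omega>"
    unfolding conv_integral_def conv_kernel_def set_lebesgue_integral_def by simp
  finally show ?thesis
    unfolding lin_sol_def using t by (simp add: Rext_def)
qed

text \<open>Substituting \<open>v = t - s\<close>; in this form the second moment involves only the stationary
  increments \<open>R t - R (t - v)\<close>.\<close>

lemma lin_sol_incr_integral:
  assumes \<omega>: "\<omega> \<in> space M" and t: "0 \<le> t"
  shows "lin_sol R x0 a t \<omega> = exp (a * t) * x0 + exp (a * t) * Rext t \<omega> - a * incr_integral a t \<omega>"
proof (cases "a = 0")
  case False
  have int_exp: "(\<integral>v. indicator {0..t} v * exp (a * v) \<partial>lborel) = (exp (a * t) - 1) / a"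
  proof -
    have "(\<integral>v. exp (a * v) * indicator {0..t} v \<partial>lborel) = exp (a * t) / a - exp (a * 0) / a"
      by (rule integral_FTC_Icc_real[where F = "\<lambda>v. exp (a * v) / a"])
        (use False t in \<open>auto intro!: derivative_eq_intros continuous_intros\<close>)
    then show ?thesis
      by (simp add: mult.commute diff_divide_distrib)
  qed
  have "integrable lborel (\<lambda>v. indicator {0..t} v *\<^sub>R exp (a * v))"
    by (rule borel_integrable_compact) (auto intro!: continuous_intros)
  then have int: "integrable lborel (\<lambda>v. indicator {0..t} v * exp (a * v) * Rext t \<omega>)"
    by simp
  have "conv_integral a t \<omega> = (\<integral>v. conv_kernel a t (t + (-1) * v) \<omega> \<partial>lborel)"
    unfolding conv_integral_def using lborel_integral_real_affine[of "-1" "\<lambda>s. conv_kernel a t s \<omega>" t] by simp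
  also have "\<dots> = (\<integral>v. indicator {0..t} v * exp (a * v) * Rext t \<omega> - incr_kernel a t v \<omega> \<partial>lborel)"
    by (rule Bochner_Integration.integral_cong)
      (auto simp: conv_kernel_def incr_kernel_def algebra_simps split: split_indicator)
  also have "\<dots> = (\<integral>v. indicator {0..t} v * exp (a * v) \<partial>lborel) * Rext t \<omega> - incr_integral a t \<omega>"
    unfolding incr_integral_def using int integrable_incr_kernel[OF \<omega>] by simp
  also have "\<dots> = (exp (a * t) - 1) / a * Rext t \<omega> - incr_integral a t \<omega>"
    unfolding int_exp ..
  finally have "a * conv_integral a t \<omega> = (exp (a * t) - 1) * Rext t \<omega> - a * incr_integral a t \<omega>"
    using False by (simp add: field_simps)
  then show ?thesis
    unfolding lin_sol_conv_integral[OF \<omega> t] by (simp add: algebra_simps)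
qed (simp add: lin_sol_conv_integral[OF \<omega> t])

lemma lin_sol_measurable [measurable]:
  assumes "0 \<le> t"
  shows "(\<lambda>\<omega>. lin_sol R x0 a t \<omega>) \<in> borel_measurable M"
proof -
  have "(\<lambda>\<omega>. exp (a * t) * x0 + Rext t \<omega> + a * conv_integral a t \<omega>) \<in> borel_measurable M"
    by measurable
  then show ?thesis
    by (rule measurable_cong[THEN iffD1, rotated]) (simp add: lin_sol_conv_integral[OF _ assms])
qed

lemma lin_sol_continuous:
  assumes \<omega>: "\<omega> \<in> space M"
  shows "continuous_on {0..T} (\<lambda>t. lin_sol R x0 a t \<omega>)"
proof -
  define g where "g s = exp (- a * s) * R s \<omega>" for s
  have R_cont: "continuous_on {0..T} (\<lambda>t. R t \<omega>)"
    using R_continuous[OF \<omega>] by (rule continuous_on_subset) auto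
  then have "continuous_on {0..T} (\<lambda>t. integral {0..t} g)"
    unfolding g_def by (intro indefinite_integral_continuous_1 integrable_continuous_interval continuous_intros)
  then have "continuous_on {0..T} (\<lambda>t. exp (a * t) * x0 + R t \<omega> + a * (exp (a * t) * integral {0..t} g))"
    using R_cont by (auto intro!: continuous_intros)
  moreover have "integral {0..t} (\<lambda>s. exp (a * (t - s)) * R s \<omega>) = exp (a * t) * integral {0..t} g" for t
    unfolding g_def integral_mult_right[symmetric]
    by (rule integral_cong) (simp add: algebra_simps exp_add[symmetric])
  ultimately show ?thesis
    unfolding lin_sol_def by simp
qed

lemma lin_sol_joint_measurable:
  assumes "0 \<le> T"
  shows "(\<lambda>(t, \<omega>). lin_sol R x0 a (min (max t 0) T) \<omega>) \<in> borel_measurable (lborel \<Otimes>\<^sub>M M)"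
proof (rule borel_measurable_continuous_paths)
  show "(\<lambda>\<omega>. lin_sol R x0 a (min (max t 0) T) \<omega>) \<in> borel_measurable M" for t
    using assms by simp
  show "continuous_on UNIV (\<lambda>t. lin_sol R x0 a (min (max t 0) T) \<omega>)" if "\<omega> \<in> space M" for \<omega>
    by (rule continuous_on_compose2[OF lin_sol_continuous[OF that, of T]])
      (use assms in \<open>auto intro!: continuous_intros\<close>)
qed

end

section \<open>Second moments of the solution\<close>

lemma (in prob_space) integral_affine_sq:
  fixes X Y :: "'a \<Rightarrow> real" and c d e :: real
  assumes "integrable M X" "integrable M Y" "integrable M (\<lambda>\<omega>. X \<omega> * X \<omega>)"
    "integrable M (\<lambda>\<omega>. Y \<omega> * Y \<omega>)" "integrable M (\<lambda>\<omega>. Y \<omega> * X \<omega>)"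
  shows "integrable M (\<lambda>\<omega>. (c + d * X \<omega> + e * Y \<omega>)\<^sup>2)"
    and "(\<integral>\<omega>. (c + d * X \<omega> + e * Y \<omega>)\<^sup>2 \<partial>M) = c\<^sup>2 + d\<^sup>2 * (\<integral>\<omega>. X \<omega> * X \<omega> \<partial>M)
           + e\<^sup>2 * (\<integral>\<omega>. Y \<omega> * Y \<omega> \<partial>M) + 2 * c * d * (\<integral>\<omega>. X \<omega> \<partial>M) + 2 * c * e * (\<integral>\<omega>. Y \<omega> \<partial>M)
           + 2 * d * e * (\<integral>\<omega>. Y \<omega> * X \<omega> \<partial>M)"
proof -
  have expand: "(\<lambda>\<omega>. (c + d * X \<omega> + e * Y \<omega>)\<^sup>2) = (\<lambda>\<omega>. c\<^sup>2 + (d\<^sup>2 * (X \<omega> * X \<omega>) + (e\<^sup>2 * (Y \<omega> * Y \<omega>)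
      + (2 * c * d * X \<omega> + (2 * c * e * Y \<omega> + 2 * d * e * (Y \<omega> * X \<omega>))))))"
    by (auto simp: power2_eq_square algebra_simps)
  have "integrable M (\<lambda>\<omega>. d\<^sup>2 * (X \<omega> * X \<omega>) + (e\<^sup>2 * (Y \<omega> * Y \<omega>)
      + (2 * c * d * X \<omega> + (2 * c * e * Y \<omega> + 2 * d * e * (Y \<omega> * X \<omega>)))))"
    using assms by (intro Bochner_Integration.integrable_add integrable_mult_right)
  then show "integrable M (\<lambda>\<omega>. (c + d * X \<omega> + e * Y \<omega>)\<^sup>2)"
    unfolding expand by simp
  show "(\<integral>\<omega>. (c + d * X \<omega> + e * Y \<omega>)\<^sup>2 \<partial>M) = c\<^sup>2 + d\<^sup>2 * (\<integral>\<omega>. X \<omega> * X \<omega> \<partial>M)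
      + e\<^sup>2 * (\<integral>\<omega>. Y \<omega> * Y \<omega> \<partial>M) + 2 * c * d * (\<integral>\<omega>. X \<omega> \<partial>M) + 2 * c * e * (\<integral>\<omega>. Y \<omega> \<partial>M)
      + 2 * d * e * (\<integral>\<omega>. Y \<omega> * X \<omega> \<partial>M)"
    unfolding expand using assms
    by (simp add: Bochner_Integration.integral_add Bochner_Integration.integrable_add prob_space)
qed

definition stationary_second_moment :: "real \<Rightarrow> real \<Rightarrow> real" where
  "stationary_second_moment H a = Gamma (2 * H + 1) / (2 * (-a) powr (2 * H))"

context rosenblatt_like_process
begin

lemma incr_integral_moments:
  assumes a: "a \<le> 0" and t: "0 \<le> t"
  shows "integrable M (incr_integral a t)"
    and "(\<integral>\<omega>. incr_integral a t \<omega> \<partial>M) = 0"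
    and "integrable M (\<lambda>\<omega>. incr_integral a t \<omega> * Rext t \<omega>)"
    and "(\<integral>\<omega>. incr_integral a t \<omega> * Rext t \<omega> \<partial>M)
           = (\<integral>v. indicator {0..t} v * exp (a * v) * (t powr (2 * H) - rosen_cov H (t - v) t) \<partial>lborel)"
proof -
  define C where "C = t powr (2 * H) + 1"
  have bound_F: "(\<integral>\<^sup>+\<omega>. ennreal ((incr_kernel a t v \<omega>)\<^sup>2) \<partial>M) \<le> ennreal C" for v
    using nn_integral_incr_kernel_sq_le[OF a t, of v] unfolding C_def by (simp add: order_trans)
  have bound_1: "(\<integral>\<^sup>+\<omega>. ennreal (((\<lambda>_. 1::real) \<omega>)\<^sup>2) \<partial>M) \<le> ennreal C"
    and bound_R: "(\<integral>\<^sup>+\<omega>. ennreal ((Rext t \<omega>)\<^sup>2) \<partial>M) \<le> ennreal C"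
    unfolding C_def nn_integral_Rext_sq using t by (simp_all add: emeasure_space_1)
  note mean = Fubini_integral_mult[where X = "\<lambda>_. 1", OF sigma_finite_measure_axioms
      incr_kernel_measurable borel_measurable_const incr_kernel_outside bound_F bound_1, simplified]
  note cross = Fubini_integral_mult[OF sigma_finite_measure_axioms
      incr_kernel_measurable Rext_measurable incr_kernel_outside bound_F bound_R]
  show "integrable M (incr_integral a t)"
    and "integrable M (\<lambda>\<omega>. incr_integral a t \<omega> * Rext t \<omega>)"
    using mean(1) cross(1) unfolding incr_integral_def by simp_all
  have "(\<integral>\<omega>. incr_kernel a t v \<omega> \<partial>M) = 0" for v
    unfolding incr_kernel_def by (simp add: integrable_Rext integral_Rext)
  then show "(\<integral>\<omega>. incr_integral a t \<omega> \<partial>M) = 0"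
    using mean(2) unfolding incr_integral_def by simp
  have "(\<integral>\<omega>. incr_kernel a t v \<omega> * Rext t \<omega> \<partial>M)
      = indicator {0..t} v * exp (a * v) * (t powr (2 * H) - rosen_cov H (t - v) t)" for v
    using integral_Rext_increment_mult_Rext[of v t]
    by (cases "v \<in> {0..t}") (simp_all add: incr_kernel_def mult.assoc)
  then show "(\<integral>\<omega>. incr_integral a t \<omega> * Rext t \<omega> \<partial>M)
      = (\<integral>v. indicator {0..t} v * exp (a * v) * (t powr (2 * H) - rosen_cov H (t - v) t) \<partial>lborel)"
    using cross(2) unfolding incr_integral_def by simp
qed

lemma integral_incr_integral_mult_Rext_bounds:
  assumes a: "a \<le> 0" and t: "0 \<le> t"
  shows "0 \<le> (\<integral>\<omega>. incr_integral a t \<omega> * Rext t \<omega> \<partial>M)"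
    and "(\<integral>\<omega>. incr_integral a t \<omega> * Rext t \<omega> \<partial>M) \<le> t powr (2 * H) * t"
proof -
  define f where "f v = indicator {0..t} v * exp (a * v) * (t powr (2 * H) - rosen_cov H (t - v) t)" for v
  have f_bounds: "0 \<le> f v \<and> f v \<le> indicator {0..t} v * t powr (2 * H)" for v
  proof (cases "v \<in> {0..t}")
    case True
    have "(t - v) powr (2 * H) \<le> t powr (2 * H)"
      using True H_pos by (auto intro: powr_mono2)
    moreover have "\<bar>t - v - t\<bar> = v"
      using True by simp
    ultimately have "rosen_cov H (t - v) t \<le> t powr (2 * H)"
      using powr_ge_zero[of v "2 * H"] unfolding rosen_cov_def by (simp only:) argo
    moreover have "0 \<le> rosen_cov H (t - v) t"
      using True H_pos by (intro rosen_cov_nonneg) auto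
    ultimately have "0 \<le> t powr (2 * H) - rosen_cov H (t - v) t"
      and "t powr (2 * H) - rosen_cov H (t - v) t \<le> t powr (2 * H)"
      by simp_all
    moreover have "0 < exp (a * v)" "exp (a * v) \<le> 1"
      using True a by (auto simp: mult_nonpos_nonneg)
    ultimately show ?thesis
      using True mult_mono[of "exp (a * v)" 1 "t powr (2 * H) - rosen_cov H (t - v) t" "t powr (2 * H)"]
      by (simp add: f_def)
  qed (simp add: f_def)
  have [measurable]: "f \<in> borel_measurable lborel"
    unfolding f_def rosen_cov_def by measurable
  have bound_integrable: "integrable lborel (\<lambda>v. indicator {0..t} v * t powr (2 * H))"
    using integrable_real_indicator[of "{0..t}" lborel] by (simp add: emeasure_lborel_Icc_eq)
  then have "integrable lborel f"
    by (rule Bochner_Integration.integrable_bound) (use f_bounds in \<open>auto intro!: AE_I2\<close>)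
  then have "(\<integral>v. f v \<partial>lborel) \<le> (\<integral>v. indicator {0..t} v * t powr (2 * H) \<partial>lborel)"
    using bound_integrable f_bounds by (intro integral_mono) auto
  moreover have "0 \<le> (\<integral>v. f v \<partial>lborel)"
    using f_bounds by (intro integral_nonneg_AE) auto
  ultimately show "0 \<le> (\<integral>\<omega>. incr_integral a t \<omega> * Rext t \<omega> \<partial>M)"
    and "(\<integral>\<omega>. incr_integral a t \<omega> * Rext t \<omega> \<partial>M) \<le> t powr (2 * H) * t"
    unfolding incr_integral_moments(4)[OF a t] f_def[symmetric] using t by (simp_all add: mult.commute)
qed

lemma incr_integral_sq:
  assumes a: "a \<le> 0" and t: "0 \<le> t"
  shows "integrable M (\<lambda>\<omega>. incr_integral a t \<omega> * incr_integral a t \<omega>)"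
    and "(\<integral>\<omega>. incr_integral a t \<omega> * incr_integral a t \<omega> \<partial>M)
           = (\<integral>z. indicator ({0..t} \<times> {0..t}) z * exp_cov_kernel a H z \<partial>(lborel \<Otimes>\<^sub>M lborel))"
proof -
  note Fubini = Fubini_integral_mult_integral[OF sigma_finite_measure_axioms incr_kernel_measurable
      incr_kernel_measurable integrable_incr_kernel integrable_incr_kernel incr_kernel_outside
      incr_kernel_outside nn_integral_incr_kernel_sq_le[OF a t] nn_integral_incr_kernel_sq_le[OF a t]]
  show "integrable M (\<lambda>\<omega>. incr_integral a t \<omega> * incr_integral a t \<omega>)"
    using Fubini(1) unfolding incr_integral_def .
  have "(\<integral>\<omega>. incr_kernel a t (fst z) \<omega> * incr_kernel a t (snd z) \<omega> \<partial>M)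
      = indicator ({0..t} \<times> {0..t}) z * exp_cov_kernel a H z" for z
  proof (cases "z \<in> {0..t} \<times> {0..t}")
    case True
    have "(\<lambda>\<omega>. incr_kernel a t (fst z) \<omega> * incr_kernel a t (snd z) \<omega>)
        = (\<lambda>\<omega>. exp (a * (fst z + snd z)) * ((Rext t \<omega> - Rext (t - fst z) \<omega>) * (Rext t \<omega> - Rext (t - snd z) \<omega>)))"
      using True by (auto simp: incr_kernel_def distrib_left exp_add mem_Times_iff mult_ac)
    then show ?thesis
      using True integral_Rext_increment_mult[of "fst z" t "snd z"]
      by (auto simp: exp_cov_kernel_def mem_Times_iff)
  qed (auto simp: incr_kernel_def mem_Times_iff split: split_indicator)
  then show "(\<integral>\<omega>. incr_integral a t \<omega> * incr_integral a t \<omega> \<partial>M)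
      = (\<integral>z. indicator ({0..t} \<times> {0..t}) z * exp_cov_kernel a H z \<partial>(lborel \<Otimes>\<^sub>M lborel))"
    using Fubini(2) unfolding incr_integral_def by simp
qed

lemma conv_integral_moments:
  assumes a: "0 \<le> a" and t: "0 \<le> t"
  shows "integrable M (conv_integral a t)"
    and "(\<integral>\<omega>. conv_integral a t \<omega> \<partial>M) = 0"
    and "integrable M (\<lambda>\<omega>. conv_integral a t \<omega> * Rext t \<omega>)"
    and "0 \<le> (\<integral>\<omega>. conv_integral a t \<omega> * Rext t \<omega> \<partial>M)"
    and "integrable M (\<lambda>\<omega>. conv_integral a t \<omega> * conv_integral a t \<omega>)"
proof -
  define C where "C = exp (2 * a * t) * t powr (2 * H) + t powr (2 * H) + 1"
  have bound_F: "(\<integral>\<^sup>+\<omega>. ennreal ((conv_kernel a t s \<omega>)\<^sup>2) \<partial>M) \<le> ennreal C" for s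
    using nn_integral_conv_kernel_sq_le[OF a t, of s] unfolding C_def by (simp add: order_trans)
  have bound_1: "(\<integral>\<^sup>+\<omega>. ennreal (((\<lambda>_. 1::real) \<omega>)\<^sup>2) \<partial>M) \<le> ennreal C"
    and bound_R: "(\<integral>\<^sup>+\<omega>. ennreal ((Rext t \<omega>)\<^sup>2) \<partial>M) \<le> ennreal C"
    unfolding C_def nn_integral_Rext_sq using t by (simp_all add: emeasure_space_1 add_increasing)
  note mean = Fubini_integral_mult[where X = "\<lambda>_. 1", OF sigma_finite_measure_axioms
      conv_kernel_measurable borel_measurable_const conv_kernel_outside bound_F bound_1, simplified]
  note cross = Fubini_integral_mult[OF sigma_finite_measure_axioms
      conv_kernel_measurable Rext_measurable conv_kernel_outside bound_F bound_R]
  note square = Fubini_integral_mult_integral[OF sigma_finite_measure_axioms conv_kernel_measurable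
      conv_kernel_measurable integrable_conv_kernel integrable_conv_kernel conv_kernel_outside
      conv_kernel_outside bound_F bound_F]
  show "integrable M (conv_integral a t)"
    and "integrable M (\<lambda>\<omega>. conv_integral a t \<omega> * Rext t \<omega>)"
    and "integrable M (\<lambda>\<omega>. conv_integral a t \<omega> * conv_integral a t \<omega>)"
    using mean(1) cross(1) square(1) unfolding conv_integral_def by simp_all
  have "(\<integral>\<omega>. conv_kernel a t s \<omega> \<partial>M) = 0" for s
    unfolding conv_kernel_def by (simp add: integrable_Rext integral_Rext)
  then show "(\<integral>\<omega>. conv_integral a t \<omega> \<partial>M) = 0"
    using mean(2) unfolding conv_integral_def by simp
  have "(\<integral>\<omega>. conv_kernel a t s \<omega> * Rext t \<omega> \<partial>M) = indicator {0..t} s * (exp (a * (t - s)) * rosen_cov H s t)" for s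
    using t by (cases "s \<in> {0..t}") (simp_all add: conv_kernel_def mult.assoc integral_Rext_mult)
  moreover have "0 \<le> indicator {0..t} s * (exp (a * (t - s)) * rosen_cov H s t)" for s
    using rosen_cov_nonneg[OF H_pos, of s t] t by (simp split: split_indicator)
  ultimately show "0 \<le> (\<integral>\<omega>. conv_integral a t \<omega> * Rext t \<omega> \<partial>M)"
    using cross(2) unfolding conv_integral_def by (simp add: integral_nonneg_AE)
qed

lemma lin_sol_sq_moment_stable:
  assumes a: "a < 0" and t: "0 \<le> t"
  shows "integrable M (\<lambda>\<omega>. (lin_sol R x0 a t \<omega>)\<^sup>2)"
    and "(\<integral>\<omega>. (lin_sol R x0 a t \<omega>)\<^sup>2 \<partial>M)
           = (exp (a * t) * x0)\<^sup>2 + (exp (a * t))\<^sup>2 * t powr (2 * H)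
             + a\<^sup>2 * (\<integral>\<omega>. incr_integral a t \<omega> * incr_integral a t \<omega> \<partial>M)
             + 2 * exp (a * t) * (-a) * (\<integral>\<omega>. incr_integral a t \<omega> * Rext t \<omega> \<partial>M)"
proof -
  note W = incr_integral_moments[OF less_imp_le[OF a] t] incr_integral_sq[OF less_imp_le[OF a] t]
  note expansion = integral_affine_sq[OF integrable_Rext W(1) integrable_Rext_mult W(5) W(3),
      of "exp (a * t) * x0" "exp (a * t)" "-a"]
  have sol: "(lin_sol R x0 a t \<omega>)\<^sup>2 = (exp (a * t) * x0 + exp (a * t) * Rext t \<omega> + (-a) * incr_integral a t \<omega>)\<^sup>2"
    if "\<omega> \<in> space M" for \<omega>
    using lin_sol_incr_integral[OF that t] by simp
  show "integrable M (\<lambda>\<omega>. (lin_sol R x0 a t \<omega>)\<^sup>2)"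
    using expansion(1) by (simp add: Bochner_Integration.integrable_cong[OF refl sol])
  have "(\<integral>\<omega>. Rext t \<omega> * Rext t \<omega> \<partial>M) = t powr (2 * H)"
    using t by (simp add: integral_Rext_mult rosen_cov_self)
  then show "(\<integral>\<omega>. (lin_sol R x0 a t \<omega>)\<^sup>2 \<partial>M)
      = (exp (a * t) * x0)\<^sup>2 + (exp (a * t))\<^sup>2 * t powr (2 * H)
        + a\<^sup>2 * (\<integral>\<omega>. incr_integral a t \<omega> * incr_integral a t \<omega> \<partial>M)
        + 2 * exp (a * t) * (-a) * (\<integral>\<omega>. incr_integral a t \<omega> * Rext t \<omega> \<partial>M)"
    using expansion(2) W(2) by (simp add: Bochner_Integration.integral_cong[OF refl sol] integral_Rext)
qed

lemma tendsto_lin_sol_sq_moment: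
  assumes a: "a < 0"
  shows "((\<lambda>t. \<integral>\<omega>. (lin_sol R x0 a t \<omega>)\<^sup>2 \<partial>M) \<longlongrightarrow> stationary_second_moment H a) at_top"
proof -
  have exp: "((\<lambda>t. exp (a * t)) \<longlongrightarrow> 0) at_top" "((\<lambda>t. exp (a * t) * t powr p) \<longlongrightarrow> 0) at_top" for p
    using a by real_asymp+
  have "((\<lambda>t. (exp (a * t) * x0)\<^sup>2 + (exp (a * t) * t powr (2 * H)) * exp (a * t)
        + a\<^sup>2 * (\<integral>z. indicator ({0..t} \<times> {0..t}) z * exp_cov_kernel a H z \<partial>(lborel \<Otimes>\<^sub>M lborel))
        + 2 * (-a) * (exp (a * t) * (\<integral>\<omega>. incr_integral a t \<omega> * Rext t \<omega> \<partial>M)))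
      \<longlongrightarrow> (0 * x0)\<^sup>2 + 0 * 0 + a\<^sup>2 * (Gamma (2 * H + 1) / (-a) powr (2 * H + 1) / (-2 * a)) + 2 * (-a) * 0) at_top"
  proof (intro tendsto_intros exp tendsto_integral_exp_cov_kernel_square[OF a H_pos])
    show "((\<lambda>t. exp (a * t) * (\<integral>\<omega>. incr_integral a t \<omega> * Rext t \<omega> \<partial>M)) \<longlongrightarrow> 0) at_top"
    proof (rule tendsto_sandwich[OF _ _ tendsto_const exp(2)[of "2 * H + 1"]])
      show "\<forall>\<^sub>F t in at_top. 0 \<le> exp (a * t) * (\<integral>\<omega>. incr_integral a t \<omega> * Rext t \<omega> \<partial>M)"
        using eventually_ge_at_top[of 0]
        by eventually_elim (use a in \<open>simp add: integral_incr_integral_mult_Rext_bounds(1)\<close>)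
      show "\<forall>\<^sub>F t in at_top. exp (a * t) * (\<integral>\<omega>. incr_integral a t \<omega> * Rext t \<omega> \<partial>M) \<le> exp (a * t) * t powr (2 * H + 1)"
        using eventually_gt_at_top[of 0]
        by eventually_elim (use a in \<open>simp add: integral_incr_integral_mult_Rext_bounds(2) powr_add\<close>)
    qed
  qed
  moreover have "\<forall>\<^sub>F t in at_top. (exp (a * t) * x0)\<^sup>2 + (exp (a * t) * t powr (2 * H)) * exp (a * t)
        + a\<^sup>2 * (\<integral>z. indicator ({0..t} \<times> {0..t}) z * exp_cov_kernel a H z \<partial>(lborel \<Otimes>\<^sub>M lborel))
        + 2 * (-a) * (exp (a * t) * (\<integral>\<omega>. incr_integral a t \<omega> * Rext t \<omega> \<partial>M))
      = (\<integral>\<omega>. (lin_sol R x0 a t \<omega>)\<^sup>2 \<partial>M)"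
    using eventually_ge_at_top[of 0]
  proof eventually_elim
    case (elim t)
    show ?case
      unfolding lin_sol_sq_moment_stable(2)[OF a elim] incr_integral_sq(2)[OF less_imp_le[OF a] elim]
      by (simp add: algebra_simps power2_eq_square)
  qed
  ultimately show ?thesis
    using a by (simp add: tendsto_cong stationary_second_moment_def powr_add power2_eq_square field_simps)
qed

lemma lin_sol_sq_moment_le:
  assumes a: "a < 0" and t: "0 \<le> t"
  shows "(\<integral>\<omega>. (lin_sol R x0 a t \<omega>)\<^sup>2 \<partial>M)
           \<le> x0\<^sup>2 + t powr (2 * H) + a\<^sup>2 * (Gamma (2 * H + 1) / (-a) powr (2 * H + 1) / (-2 * a))
             + 2 * (-a) * (t powr (2 * H) * t)"
proof -
  have e: "0 < exp (a * t)" "exp (a * t) \<le> 1"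
    using a t by (auto simp: mult_nonpos_nonneg)
  then have e2: "(exp (a * t))\<^sup>2 \<le> 1"
    by (simp add: power_le_one)
  have "(exp (a * t) * x0)\<^sup>2 \<le> x0\<^sup>2" "(exp (a * t))\<^sup>2 * t powr (2 * H) \<le> t powr (2 * H)"
    using e2 by (simp_all add: power_mult_distrib mult_left_le_one_le)
  moreover have "a\<^sup>2 * (\<integral>\<omega>. incr_integral a t \<omega> * incr_integral a t \<omega> \<partial>M)
      \<le> a\<^sup>2 * (Gamma (2 * H + 1) / (-a) powr (2 * H + 1) / (-2 * a))"
    unfolding incr_integral_sq(2)[OF less_imp_le[OF a] t]
    by (intro mult_left_mono integral_exp_cov_kernel_square_le[OF a H_pos]) simp
  moreover have "exp (a * t) * (\<integral>\<omega>. incr_integral a t \<omega> * Rext t \<omega> \<partial>M) \<le> 1 * (t powr (2 * H) * t)"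
    using e integral_incr_integral_mult_Rext_bounds[OF less_imp_le[OF a] t] by (intro mult_mono) auto
  then have "2 * exp (a * t) * (-a) * (\<integral>\<omega>. incr_integral a t \<omega> * Rext t \<omega> \<partial>M) \<le> 2 * (-a) * (t powr (2 * H) * t)"
    using a by (simp add: mult.assoc mult.left_commute)
  ultimately show ?thesis
    unfolding lin_sol_sq_moment_stable(2)[OF a t] by linarith
qed

lemma lin_sol_sq_moment_unstable:
  assumes a: "0 \<le> a" and t: "0 \<le> t"
  shows "integrable M (\<lambda>\<omega>. (lin_sol R x0 a t \<omega>)\<^sup>2)"
    and "t powr (2 * H) \<le> (\<integral>\<omega>. (lin_sol R x0 a t \<omega>)\<^sup>2 \<partial>M)"
proof -
  note I = conv_integral_moments[OF a t]
  note expansion = integral_affine_sq[OF integrable_Rext I(1) integrable_Rext_mult I(5) I(3),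
      of "exp (a * t) * x0" 1 a]
  have sol: "(lin_sol R x0 a t \<omega>)\<^sup>2 = (exp (a * t) * x0 + 1 * Rext t \<omega> + a * conv_integral a t \<omega>)\<^sup>2"
    if "\<omega> \<in> space M" for \<omega>
    using lin_sol_conv_integral[OF that t] by simp
  show "integrable M (\<lambda>\<omega>. (lin_sol R x0 a t \<omega>)\<^sup>2)"
    using expansion(1) by (simp add: Bochner_Integration.integrable_cong[OF refl sol])
  have "(\<integral>\<omega>. Rext t \<omega> * Rext t \<omega> \<partial>M) = t powr (2 * H)"
    using t by (simp add: integral_Rext_mult rosen_cov_self)
  moreover have "0 \<le> (\<integral>\<omega>. conv_integral a t \<omega> * conv_integral a t \<omega> \<partial>M)"
    by (simp add: integral_nonneg_AE)
  ultimately show "t powr (2 * H) \<le> (\<integral>\<omega>. (lin_sol R x0 a t \<omega>)\<^sup>2 \<partial>M)"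
    using expansion(2) I(2,4) a
    by (simp add: Bochner_Integration.integral_cong[OF refl sol] integral_Rext)
qed

lemma nn_integral_lin_sol_sq:
  assumes "0 \<le> t"
  shows "(\<integral>\<^sup>+\<omega>. ennreal ((lin_sol R x0 a t \<omega>)\<^sup>2) \<partial>M) = ennreal (\<integral>\<omega>. (lin_sol R x0 a t \<omega>)\<^sup>2 \<partial>M)"
proof -
  have "integrable M (\<lambda>\<omega>. (lin_sol R x0 a t \<omega>)\<^sup>2)"
    using lin_sol_sq_moment_stable(1) lin_sol_sq_moment_unstable(1) assms by (cases "a < 0") auto
  then show ?thesis
    by (rule nn_integral_eq_integral) simp
qed

end

section \<open>The long-run cost of a linear feedback\<close>

context rosenblatt_like_process
begin

lemma nn_integral_Icc_lin_sol_sq: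
  assumes "\<omega> \<in> space M" and c: "0 \<le> c"
  shows "(\<integral>\<^sup>+t. ennreal (c * (lin_sol R x0 a t \<omega>)\<^sup>2) * indicator {0..T} t \<partial>lborel)
           = ennreal (integral {0..T} (\<lambda>t. c * (lin_sol R x0 a t \<omega>)\<^sup>2))"
proof -
  have "continuous_on {0..T} (\<lambda>t. c * (lin_sol R x0 a t \<omega>)\<^sup>2)"
    using lin_sol_continuous[OF assms(1)] by (auto intro!: continuous_intros)
  then have "((\<lambda>t. c * (lin_sol R x0 a t \<omega>)\<^sup>2) has_integral integral {0..T} (\<lambda>t. c * (lin_sol R x0 a t \<omega>)\<^sup>2)) {0..T}"
    by (intro integrable_integral integrable_continuous_interval)
  with c show ?thesis
    by (intro nn_integral_has_integral_lebesgue') simp_all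
qed

lemma nn_integral_integral_lin_sol_sq:
  assumes T: "0 \<le> T" and c: "0 \<le> c"
  shows "(\<integral>\<^sup>+\<omega>. ennreal (integral {0..T} (\<lambda>t. c * (lin_sol R x0 a t \<omega>)\<^sup>2)) \<partial>M)
           = (\<integral>\<^sup>+t. ennreal c * (\<integral>\<^sup>+\<omega>. ennreal ((lin_sol R x0 a t \<omega>)\<^sup>2) \<partial>M) * indicator {0..T} t \<partial>lborel)"
proof -
  interpret pair_sigma_finite lborel M
    by (simp add: pair_sigma_finite_def sigma_finite_lborel sigma_finite_measure_axioms)
  define G where "G t \<omega> = ennreal (c * (lin_sol R x0 a (min (max t 0) T) \<omega>)\<^sup>2) * indicator {0..T} t" for t \<omega>
  have "(\<lambda>z. ennreal (c * (case z of (t, \<omega>) \<Rightarrow> lin_sol R x0 a (min (max t 0) T) \<omega>)\<^sup>2) * indicator {0..T} (fst z))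
      \<in> borel_measurable (lborel \<Otimes>\<^sub>M M)"
    using lin_sol_joint_measurable[OF T, of x0 a] by measurable
  then have G_measurable: "case_prod G \<in> borel_measurable (lborel \<Otimes>\<^sub>M M)"
    unfolding G_def by (simp add: case_prod_beta')
  have "(\<integral>\<^sup>+t. G t \<omega> \<partial>lborel) = (\<integral>\<^sup>+t. ennreal (c * (lin_sol R x0 a t \<omega>)\<^sup>2) * indicator {0..T} t \<partial>lborel)" for \<omega>
    unfolding G_def by (intro nn_integral_cong) (auto split: split_indicator)
  then have "ennreal (integral {0..T} (\<lambda>t. c * (lin_sol R x0 a t \<omega>)\<^sup>2)) = (\<integral>\<^sup>+t. G t \<omega> \<partial>lborel)"
    if "\<omega> \<in> space M" for \<omega>
    using nn_integral_Icc_lin_sol_sq[OF that c] by simp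
  then have "(\<integral>\<^sup>+\<omega>. ennreal (integral {0..T} (\<lambda>t. c * (lin_sol R x0 a t \<omega>)\<^sup>2)) \<partial>M)
      = (\<integral>\<^sup>+t. (\<integral>\<^sup>+\<omega>. G t \<omega> \<partial>M) \<partial>lborel)"
    using Fubini'[OF G_measurable] by (simp cong: nn_integral_cong)
  also have "\<dots> = (\<integral>\<^sup>+t. ennreal c * (\<integral>\<^sup>+\<omega>. ennreal ((lin_sol R x0 a t \<omega>)\<^sup>2) \<partial>M) * indicator {0..T} t \<partial>lborel)"
  proof (intro nn_integral_cong)
    fix t :: real
    show "(\<integral>\<^sup>+\<omega>. G t \<omega> \<partial>M) = ennreal c * (\<integral>\<^sup>+\<omega>. ennreal ((lin_sol R x0 a t \<omega>)\<^sup>2) \<partial>M) * indicator {0..T} t"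
    proof (cases "t \<in> {0..T}")
      case True
      then have "(\<integral>\<^sup>+\<omega>. G t \<omega> \<partial>M) = (\<integral>\<^sup>+\<omega>. ennreal c * ennreal ((lin_sol R x0 a t \<omega>)\<^sup>2) \<partial>M)"
        unfolding G_def using c by (intro nn_integral_cong) (simp add: ennreal_mult)
      then show ?thesis
        using True by (simp add: nn_integral_cmult)
    qed (simp add: G_def)
  qed
  finally show ?thesis .
qed

lemma lqr_cost_eq_limsup_time_average:
  assumes q: "0 \<le> q" and r: "0 \<le> r"
  shows "lqr_cost M R b1 b2 x0 q r K
           = limsup_time_average (\<lambda>t. ennreal (q + r * K\<^sup>2) * (\<integral>\<^sup>+\<omega>. ennreal ((lin_sol R x0 (b1 + b2 * K) t \<omega>)\<^sup>2) \<partial>M))"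
proof -
  have identity: "q * x\<^sup>2 + r * (K * x)\<^sup>2 = (q + r * K\<^sup>2) * x\<^sup>2" for x :: real
    by (simp add: power_mult_distrib algebra_simps)
  have "\<forall>\<^sub>F T in at_top.
      ennreal (1 / T) * (\<integral>\<^sup>+\<omega>. ennreal (integral {0..T} (\<lambda>t. q * (lin_sol R x0 (b1 + b2 * K) t \<omega>)\<^sup>2
        + r * (K * lin_sol R x0 (b1 + b2 * K) t \<omega>)\<^sup>2)) \<partial>M)
      = ennreal (1 / T) * (\<integral>\<^sup>+t. ennreal (q + r * K\<^sup>2) * (\<integral>\<^sup>+\<omega>. ennreal ((lin_sol R x0 (b1 + b2 * K) t \<omega>)\<^sup>2) \<partial>M)
        * indicator {0..T} t \<partial>lborel)"
    using eventually_ge_at_top[of 0]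
  proof eventually_elim
    case (elim T)
    show ?case
      unfolding identity nn_integral_integral_lin_sol_sq[OF elim add_nonneg_nonneg[OF q mult_nonneg_nonneg[OF r zero_le_power2]]] ..
  qed
  then show ?thesis
    unfolding lqr_cost_def limsup_time_average_def by (rule Limsup_eq)
qed

lemma lqr_cost_stable:
  assumes a: "b1 + b2 * K < 0" and q: "0 \<le> q" and r: "0 \<le> r"
  shows "lqr_cost M R b1 b2 x0 q r K = ennreal ((q + r * K\<^sup>2) * stationary_second_moment H (b1 + b2 * K))"
proof -
  define a where "a = b1 + b2 * K"
  define c where "c = q + r * K\<^sup>2"
  have c: "0 \<le> c"
    unfolding c_def using q r by simp
  define J where "J = Gamma (2 * H + 1) / (-a) powr (2 * H + 1) / (-2 * a)"
  have bounded: "\<exists>B. \<forall>t\<in>{0..T}. c * (\<integral>\<omega>. (lin_sol R x0 a t \<omega>)\<^sup>2 \<partial>M) \<le> B" for T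
  proof (intro exI ballI)
    fix t
    assume t: "t \<in> {0..T}"
    then have "t powr (2 * H) \<le> T powr (2 * H)" "t powr (2 * H) * t \<le> T powr (2 * H) * T"
      using H_pos by (auto intro!: powr_mono2 mult_mono)
    moreover have "(\<integral>\<omega>. (lin_sol R x0 a t \<omega>)\<^sup>2 \<partial>M) \<le> x0\<^sup>2 + t powr (2 * H) + a\<^sup>2 * J + 2 * (-a) * (t powr (2 * H) * t)"
      using lin_sol_sq_moment_le[of a t x0] a t unfolding a_def[symmetric] J_def by auto
    ultimately have "(\<integral>\<omega>. (lin_sol R x0 a t \<omega>)\<^sup>2 \<partial>M) \<le> x0\<^sup>2 + T powr (2 * H) + a\<^sup>2 * J + 2 * (-a) * (T powr (2 * H) * T)"
      using a unfolding a_def[symmetric] by (smt (verit) mult_left_mono)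
    then show "c * (\<integral>\<omega>. (lin_sol R x0 a t \<omega>)\<^sup>2 \<partial>M) \<le> c * (x0\<^sup>2 + T powr (2 * H) + a\<^sup>2 * J + 2 * (-a) * (T powr (2 * H) * T))"
      using c by (rule mult_left_mono)
  qed
  have "0 \<le> stationary_second_moment H a"
    unfolding stationary_second_moment_def using H_pos by (simp add: Gamma_real_pos less_imp_le)
  then have limit: "limsup_time_average (\<lambda>t. ennreal (c * (\<integral>\<omega>. (lin_sol R x0 a t \<omega>)\<^sup>2 \<partial>M)))
      = ennreal (c * stationary_second_moment H a)"
    using tendsto_lin_sol_sq_moment[of a x0] a c bounded unfolding a_def
    by (intro limsup_time_average_tendsto tendsto_mult_left) auto
  have "lqr_cost M R b1 b2 x0 q r K
      = limsup_time_average (\<lambda>t. ennreal c * (\<integral>\<^sup>+\<omega>. ennreal ((lin_sol R x0 a t \<omega>)\<^sup>2) \<partial>M))"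
    unfolding lqr_cost_eq_limsup_time_average[OF q r] a_def c_def ..
  also have "\<dots> = limsup_time_average (\<lambda>t. ennreal (c * (\<integral>\<omega>. (lin_sol R x0 a t \<omega>)\<^sup>2 \<partial>M)))"
    using c by (intro limsup_time_average_cong) (simp add: nn_integral_lin_sol_sq ennreal_mult)
  also have "\<dots> = ennreal (c * stationary_second_moment H a)"
    by (rule limit)
  finally show ?thesis
    unfolding a_def c_def .
qed

lemma lqr_cost_unstable:
  assumes a: "0 \<le> b1 + b2 * K" and q: "0 < q" and r: "0 \<le> r"
  shows "lqr_cost M R b1 b2 x0 q r K = \<infinity>"
proof -
  define c where "c = q + r * K\<^sup>2"
  have c: "0 < c"
    unfolding c_def using q r by (simp add: add_pos_nonneg)
  have lower: "ennreal l \<le> lqr_cost M R b1 b2 x0 q r K" if l: "0 \<le> l" for l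
  proof -
    have "filterlim (\<lambda>t. c * t powr (2 * H)) at_top at_top"
      using c H_pos by real_asymp
    then have "\<forall>\<^sub>F t in at_top. l \<le> c * t powr (2 * H) \<and> 0 \<le> t"
      by (intro eventually_conj eventually_ge_at_top) (simp add: filterlim_at_top)
    then have "\<forall>\<^sub>F t in at_top. ennreal l \<le> ennreal c * (\<integral>\<^sup>+\<omega>. ennreal ((lin_sol R x0 (b1 + b2 * K) t \<omega>)\<^sup>2) \<partial>M)"
    proof eventually_elim
      case (elim t)
      then have "l \<le> c * (\<integral>\<omega>. (lin_sol R x0 (b1 + b2 * K) t \<omega>)\<^sup>2 \<partial>M)"
        using lin_sol_sq_moment_unstable(2)[OF a, of t x0] c by (meson mult_left_mono less_imp_le order_trans)
      then show ?case
        using elim c by (simp add: nn_integral_lin_sol_sq ennreal_mult[symmetric] ennreal_leI)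
    qed
    then show ?thesis
      unfolding lqr_cost_eq_limsup_time_average[OF less_imp_le[OF q] r] c_def[symmetric]
      using l by (rule limsup_time_average_ge)
  qed
  show ?thesis
  proof (rule ccontr)
    assume "lqr_cost M R b1 b2 x0 q r K \<noteq> \<infinity>"
    then obtain y where "lqr_cost M R b1 b2 x0 q r K = ennreal y" "0 \<le> y"
      by (cases "lqr_cost M R b1 b2 x0 q r K" rule: ennreal_cases) auto
    then show False
      using lower[of "y + 1"] by simp
  qed
qed

end

section \<open>The optimal gain\<close>

lemma has_real_derivative_quadratic_over_powr:
  fixes A r c p s :: real
  assumes s: "0 < s"
  shows "((\<lambda>x. (A + r * (x + c)\<^sup>2) / x powr p) has_real_derivative
           2 * (r * (s + c) * s - p / 2 * (A + r * (s + c)\<^sup>2)) / (s * s powr p)) (at s)"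
proof -
  have "((\<lambda>x. (A + r * (x + c)\<^sup>2) / x powr p) has_real_derivative
      (2 * r * (s + c) * s powr p - (A + r * (s + c)\<^sup>2) * (p * s powr (p - 1))) / (s powr p * s powr p)) (at s)"
    using s by (intro DERIV_divide has_real_derivative_powr) (auto intro!: derivative_eq_intros)
  moreover have "(2 * r * (s + c) * s powr p - (A + r * (s + c)\<^sup>2) * (p * s powr (p - 1))) / (s powr p * s powr p)
      = 2 * (r * (s + c) * s - p / 2 * (A + r * (s + c)\<^sup>2)) / (s * s powr p)"
    unfolding powr_diff using s by (simp add: field_simps)
  ultimately show ?thesis
    by simp
qed

text \<open>For \<open>p = 2 H\<close> the numerator of the derivative above is twice the quadratic
  \<open>r (s + c) s - H (A + r (s + c)\<^sup>2)\<close>, and \<open>s0\<close> is its positive root.\<close>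

lemma quadratic_over_powr_root:
  fixes A r c H :: real
  assumes A: "0 < A" and r: "0 < r" and H: "0 < H" "H < 1"
  defines "s0 \<equiv> (c * (2 * H - 1) + sqrt (c\<^sup>2 + 4 * H * (1 - H) * (A / r))) / (2 * (1 - H))"
  shows "0 < s0" and "r * (s0 + c) * s0 = H * (A + r * (s0 + c)\<^sup>2)"
proof -
  define D where "D = c\<^sup>2 + 4 * H * (1 - H) * (A / r)"
  define P where "P s = r * (s + c) * s - H * (A + r * (s + c)\<^sup>2)" for s
  have "c\<^sup>2 < D"
    unfolding D_def using A r H by simp
  then have sqrt_D: "\<bar>c\<bar> < sqrt D" "(sqrt D)\<^sup>2 = D"
    using real_sqrt_less_mono[of "c\<^sup>2" D] by (auto intro: order_trans[OF zero_le_power2 less_imp_le])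
  have "\<bar>c\<bar> * \<bar>2 * H - 1\<bar> \<le> \<bar>c\<bar>"
    by (rule mult_right_le_one_le) (use H in auto)
  then have "\<bar>c * (2 * H - 1)\<bar> \<le> \<bar>c\<bar>"
    by (simp only: abs_mult)
  then show "0 < s0"
    unfolding s0_def D_def[symmetric] using sqrt_D H by (intro divide_pos_pos) auto
  have "(2 * (1 - H))\<^sup>2 * P s0 = 0"
  proof -
    have "s0 * (2 * (1 - H)) = c * (2 * H - 1) + sqrt D" "r * (sqrt D)\<^sup>2 = r * c\<^sup>2 + 4 * H * (1 - H) * A"
      unfolding s0_def D_def[symmetric] using sqrt_D H r by (simp_all add: D_def field_simps)
    then show ?thesis
      unfolding P_def by algebra
  qed
  then show "r * (s0 + c) * s0 = H * (A + r * (s0 + c)\<^sup>2)"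
    using H unfolding P_def by simp
qed

lemma quadratic_over_powr_root_sign:
  fixes A r c H :: real
  assumes A: "0 < A" and r: "0 < r" and H: "0 < H" "H < 1"
  defines "s0 \<equiv> (c * (2 * H - 1) + sqrt (c\<^sup>2 + 4 * H * (1 - H) * (A / r))) / (2 * (1 - H))"
  shows "\<And>s. 0 < s \<Longrightarrow> s \<le> s0 \<Longrightarrow> r * (s + c) * s - H * (A + r * (s + c)\<^sup>2) \<le> 0"
    and "\<And>s. s0 \<le> s \<Longrightarrow> 0 \<le> r * (s + c) * s - H * (A + r * (s + c)\<^sup>2)"
proof -
  note s0 = quadratic_over_powr_root(1)[OF A r H, where c = c, folded s0_def]
  note root = quadratic_over_powr_root(2)[OF A r H, where c = c, folded s0_def]
  define P where "P s = r * (s + c) * s - H * (A + r * (s + c)\<^sup>2)" for s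
  define s1 where "s1 = - H * (A + r * c\<^sup>2) / (r * (1 - H) * s0)"
  have s1: "s1 < 0"
    unfolding s1_def using A r H s0 by (intro divide_neg_pos) (auto intro!: mult_pos_pos add_pos_nonneg)
  have factor: "P s = r * (1 - H) * (s - s0) * (s - s1)" for s
  proof -
    have product: "r * (1 - H) * s0 * s1 = - H * (A + r * c\<^sup>2)"
      unfolding s1_def using r H s0 by (simp add: field_simps)
    have sum: "r * (1 - H) * (s0 + s1) = r * c * (2 * H - 1)"
    proof -
      have "s0 * (r * (1 - H) * (s0 + s1) - r * c * (2 * H - 1)) = P s0"
        unfolding P_def s1_def using r H s0 by (simp add: field_simps power2_eq_square)
      then show ?thesis
        using root s0 unfolding P_def by simp
    qed
    have "P s = r * (1 - H) * s\<^sup>2 - r * c * (2 * H - 1) * s + - H * (A + r * c\<^sup>2)"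
      unfolding P_def by (simp add: algebra_simps power2_eq_square)
    also have "\<dots> = r * (1 - H) * s\<^sup>2 - r * (1 - H) * (s0 + s1) * s + r * (1 - H) * s0 * s1"
      unfolding sum product ..
    also have "\<dots> = r * (1 - H) * (s - s0) * (s - s1)"
      by (simp add: algebra_simps power2_eq_square)
    finally show ?thesis .
  qed
  have coefficient: "0 \<le> r * (1 - H)"
    using r H by simp
  show "P s \<le> 0" if "0 < s" "s \<le> s0" for s
    unfolding factor using coefficient s1 that by (intro mult_nonpos_nonneg mult_nonneg_nonpos) auto
  show "0 \<le> P s" if "s0 \<le> s" for s
    unfolding factor using r H s0 s1 that by (intro mult_nonneg_nonneg) auto
qed

lemma quadratic_over_powr_minimum:
  fixes A r c H :: real
  assumes A: "0 < A" and r: "0 < r" and H: "0 < H" "H < 1" and s: "0 < s"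
  defines "s0 \<equiv> (c * (2 * H - 1) + sqrt (c\<^sup>2 + 4 * H * (1 - H) * (A / r))) / (2 * (1 - H))"
  shows "(A + r * (s0 + c)\<^sup>2) / s0 powr (2 * H) \<le> (A + r * (s + c)\<^sup>2) / s powr (2 * H)"
proof -
  note s0 = quadratic_over_powr_root(1)[OF A r H, where c = c, folded s0_def]
  note sign = quadratic_over_powr_root_sign[OF A r H, where c = c, folded s0_def]
  define \<phi> where "\<phi> x = (A + r * (x + c)\<^sup>2) / x powr (2 * H)" for x
  have deriv: "(\<phi> has_real_derivative 2 * (r * (x + c) * x - H * (A + r * (x + c)\<^sup>2)) / (x * x powr (2 * H))) (at x)"
    if "0 < x" for x
    using has_real_derivative_quadratic_over_powr[OF that, of A r c "2 * H"] unfolding \<phi>_def by simp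
  have continuous: "continuous_on {x..y} \<phi>" if "0 < x" for x y
  proof (rule DERIV_atLeastAtMost_imp_continuous_on)
    fix z
    assume "x \<le> z" "z \<le> y"
    then show "\<exists>d. (\<phi> has_real_derivative d) (at z)"
      using deriv[of z] that by auto
  qed
  show ?thesis
  proof (cases "s \<le> s0")
    case True
    have "\<phi> s0 \<le> \<phi> s"
    proof (rule DERIV_nonpos_imp_decreasing_open[OF True _ continuous[OF s]])
      fix x
      assume "s < x" "x < s0"
      then show "\<exists>y. (\<phi> has_real_derivative y) (at x) \<and> y \<le> 0"
        using deriv[of x] sign(1)[of x] s by (intro exI conjI) (auto intro!: divide_nonpos_nonneg)
    qed
    then show ?thesis
      unfolding \<phi>_def .
  next
    case False
    have "\<phi> s0 \<le> \<phi> s"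
    proof (rule DERIV_nonneg_imp_increasing_open[of s0 s \<phi>])
      fix x
      assume "s0 < x" "x < s"
      then show "\<exists>y. (\<phi> has_real_derivative y) (at x) \<and> 0 \<le> y"
        using deriv[of x] s0 sign(2)[of x] by (intro exI conjI) (auto intro!: divide_nonneg_nonneg)
    qed (use False continuous[OF s0] in auto)
    then show ?thesis
      unfolding \<phi>_def .
  qed
qed

lemma lqr_optimal_gain:
  fixes H b1 b2 q r Khat :: real
  assumes H: "0 < H" "H < 1" and b2: "b2 \<noteq> 0" and q: "0 < q" and r: "0 < r"
    and Khat_def: "Khat = - (b1 + sqrt (b1\<^sup>2 + 4 * H * (1 - H) * (b2\<^sup>2 * q / r))) / (2 * b2 * (1 - H))"
  shows "b1 + b2 * Khat < 0"
    and "- (r * Khat / b2) * (- (b1 + b2 * Khat)) = H * (q + r * Khat\<^sup>2)"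
    and "\<And>K. b1 + b2 * K < 0 \<Longrightarrow> (q + r * Khat\<^sup>2) * stationary_second_moment H (b1 + b2 * Khat)
           \<le> (q + r * K\<^sup>2) * stationary_second_moment H (b1 + b2 * K)"
proof -
  define A where "A = q * b2\<^sup>2"
  define s0 where "s0 = (b1 * (2 * H - 1) + sqrt (b1\<^sup>2 + 4 * H * (1 - H) * (A / r))) / (2 * (1 - H))"
  have A: "0 < A"
    unfolding A_def using q b2 by simp
  note root = quadratic_over_powr_root[OF A r H, where c = b1, folded s0_def]
  have s0_Khat: "b1 + b2 * Khat = - s0"
    unfolding Khat_def s0_def A_def using b2 H by (simp add: field_simps)
  have cost: "q + r * K\<^sup>2 = (A + r * (- (b1 + b2 * K) + b1)\<^sup>2) / b2\<^sup>2" for K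
    unfolding A_def using b2 by (simp add: field_simps power2_eq_square)
  show "b1 + b2 * Khat < 0"
    using s0_Khat root(1) by simp
  have Khat: "Khat = - (s0 + b1) / b2"
    using s0_Khat b2 by (simp add: field_simps)
  have "- (r * Khat / b2) * (- (b1 + b2 * Khat)) = r * (s0 + b1) * s0 / b2\<^sup>2"
    unfolding s0_Khat unfolding Khat using b2 by (simp add: field_simps power2_eq_square)
  then show "- (r * Khat / b2) * (- (b1 + b2 * Khat)) = H * (q + r * Khat\<^sup>2)"
    unfolding cost[of Khat] s0_Khat root(2) by simp
  fix K
  assume K: "b1 + b2 * K < 0"
  have "(A + r * (s0 + b1)\<^sup>2) / s0 powr (2 * H) \<le> (A + r * (- (b1 + b2 * K) + b1)\<^sup>2) / (- (b1 + b2 * K)) powr (2 * H)"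
    using quadratic_over_powr_minimum[OF A r H, of "- (b1 + b2 * K)" b1] K unfolding s0_def by simp
  then have "Gamma (2 * H + 1) / (2 * b2\<^sup>2) * ((A + r * (s0 + b1)\<^sup>2) / s0 powr (2 * H))
      \<le> Gamma (2 * H + 1) / (2 * b2\<^sup>2) * ((A + r * (- (b1 + b2 * K) + b1)\<^sup>2) / (- (b1 + b2 * K)) powr (2 * H))"
    using H by (intro mult_left_mono) (auto intro!: divide_nonneg_pos less_imp_le[OF Gamma_real_pos])
  then show "(q + r * Khat\<^sup>2) * stationary_second_moment H (b1 + b2 * Khat)
      \<le> (q + r * K\<^sup>2) * stationary_second_moment H (b1 + b2 * K)"
    unfolding cost[of Khat] cost[of K] s0_Khat stationary_second_moment_def by (simp add: field_simps)
qed

lemma Gamma_div_powr_stationary: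
  fixes H s c1 c2 :: real
  assumes s: "0 < s" and H: "0 < H" and stationary: "c1 * s = H * c2"
  shows "Gamma (2 * H) / s powr (2 * H - 1) * c1 = Gamma (2 * H + 1) / (2 * s powr (2 * H)) * c2"
proof -
  have Gamma: "Gamma (2 * H + 1) = 2 * H * Gamma (2 * H)"
    using H Gamma_plus1[of "2 * H"] by (simp add: nonpos_Ints_def)
  have "s powr (2 * H) = s powr (2 * H - 1) * s"
    using s powr_add[of s "2 * H - 1" 1] by simp
  then have "Gamma (2 * H) / s powr (2 * H - 1) * c1 = Gamma (2 * H) * (c1 * s) / s powr (2 * H)"
    using s by (simp add: field_simps)
  also have "\<dots> = Gamma (2 * H + 1) / (2 * s powr (2 * H)) * c2"
    unfolding stationary Gamma using H by (simp add: field_simps)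
  finally show ?thesis .
qed

theorem mainTheorem1:
  fixes M :: "'a measure" and R :: "real \<Rightarrow> 'a \<Rightarrow> real"
    and H b1 b2 x0 q r :: real
  assumes H: "1/2 < H" "H < 1"
    and b2: "b2 \<noteq> 0" and q: "q > 0" and r: "r > 0"
    and R: "rosenblatt_like M H R"
  defines "Khat \<equiv> - (b1 + sqrt (b1\<^sup>2 + 4 * H * (1 - H) * (b2\<^sup>2 * q / r))) / (2 * b2 * (1 - H))"
  shows "(\<forall>K. lqr_cost M R b1 b2 x0 q r Khat \<le> lqr_cost M R b1 b2 x0 q r K)
    \<and> lqr_cost M R b1 b2 x0 q r Khat =
        ennreal (Gamma (2*H) / (- (b1 + b2 * Khat)) powr (2*H - 1) * (- (r * Khat / b2)))
    \<and> Gamma (2*H) / (- (b1 + b2 * Khat)) powr (2*H - 1) * (- (r * Khat / b2)) =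
        Gamma (2*H + 1) / (2 * (- (b1 + b2 * Khat)) powr (2*H)) * (q + r * Khat\<^sup>2)"
proof -
  have H_pos: "0 < H" \<comment> \<open>the only use of \<open>1/2 < H\<close>\<close>
    using H by simp
  interpret rosenblatt_like_process M H R
    using rosenblatt_like_process_if_rosenblatt_like[OF R H_pos] .
  note gain = lqr_optimal_gain[OF H_pos H(2) b2 q r Khat_def[THEN meta_eq_to_obj_eq]]
  have cost_Khat: "lqr_cost M R b1 b2 x0 q r Khat
      = ennreal ((q + r * Khat\<^sup>2) * stationary_second_moment H (b1 + b2 * Khat))"
    using gain(1) q r by (intro lqr_cost_stable) auto
  have "lqr_cost M R b1 b2 x0 q r Khat \<le> lqr_cost M R b1 b2 x0 q r K" for K
  proof (cases "b1 + b2 * K < 0")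
    case True
    then show ?thesis
      unfolding cost_Khat using lqr_cost_stable[OF True] gain(3)[OF True] q r by (simp add: ennreal_leI)
  qed (use q r lqr_cost_unstable in auto)
  moreover have "Gamma (2 * H) / (- (b1 + b2 * Khat)) powr (2 * H - 1) * (- (r * Khat / b2))
      = Gamma (2 * H + 1) / (2 * (- (b1 + b2 * Khat)) powr (2 * H)) * (q + r * Khat\<^sup>2)"
    using gain(1,2) H_pos by (intro Gamma_div_powr_stationary) auto
  ultimately show ?thesis
    using cost_Khat unfolding stationary_second_moment_def by (simp add: mult.commute)
qed

end
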